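(* Let $z^0\in X$ and let $\{\sigma_k\},\{\eta_k\},\{\delta_k\}$ be nonnegative sequences with $\sum_k\eta_k<\infty$, $\inf_k\sigma_k>0$, $\sup_k\delta_k<1$, and let $z^{k+1}$ be an output of IGPPAstep$(z^k,\sigma_k,\eta_k,\delta_k,\gamma,M)$ for all $k\ge0$, where $\gamma\in(0,2)$. Assume $T$ satisfies the bounded metric subregularity condition, let $\bar z^0$ be a point of $\Omega$ nearest to $z^0$ in $\|\cdot\|_M$, let $r>0$ satisfy $r\ge\|\bar z^0\|+\frac{1}{\lambda_{\min}(M)}\big(\operatorname{dist}_M(z^0,\Omega)+\gamma\sum_{k\ge0}\eta_k\big)$, and let $\kappa_r>0$ be such that $\operatorname{dist}(z,\Omega)\le\kappa_r\operatorname{dist}(0,T(z))$ whenever $\|z\|\le r$. Then for every $k\ge0$, $$\operatorname{dist}_M(z^{k+1},\Omega)\le\rho_k\operatorname{dist}_M(z^k,\Omega),\quad \rho_k:=\frac{1}{1-\delta_k}\Big(\sqrt{1-\frac{\min\{\gamma,2\gamma-\gamma^2\}\sigma_k^2}{\sigma_k^2+\kappa_r^2}}+\delta_k\Big(\frac{\min\{\gamma,1\}\kappa_r}{\sqrt{\sigma_k^2+\kappa_r^2}}+1\Big)\Big).$$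
   Context: $X$ is a finite-dimensional real Hilbert space with inner product $\langle\cdot,\cdot\rangle$ and norm $\|\cdot\|$; $T:X\rightrightarrows X$ is maximal monotone and $\Omega:=T^{-1}(0)$ is nonempty. $M$ is a self-adjoint positive definite linear operator on $X$ with $\lambda_{\max}(M)=1$; $\|z\|_M=\sqrt{\langle z,Mz\rangle}$, $\operatorname{dist}_M(z,D)=\min_{d\in D}\|d-z\|_M$, $\operatorname{dist}=\operatorname{dist}_I$. For $\sigma>0$, $\mathcal{J}_{\sigma M^{-1}T}:=(I+\sigma M^{-1}T)^{-1}$. A point $z^+$ is an output of IGPPAstep$(z,\sigma,\eta,\delta,\gamma,M)$ if $z^+=\gamma w+(1-\gamma)z$ for some $w$ with $\|w-\mathcal{J}_{\sigma M^{-1}T}(z)\|_M\le\min\{\eta,\delta\|w-z\|_M\}$. Bounded metric subregularity of $T$: for every $r>0$ there is $\kappa_r>0$ with $\operatorname{dist}(z,\Omega)\le\kappa_r\operatorname{dist}(0,T(z))$ for all $\|z\|\le r$. *)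

theory Defs
  imports "HOL-Analysis.Analysis"
begin

definition monotone_op :: "('a::real_inner \<Rightarrow> 'a set) \<Rightarrow> bool" where
  "monotone_op T \<longleftrightarrow> (\<forall>x y u v. u \<in> T x \<longrightarrow> v \<in> T y \<longrightarrow> 0 \<le> (x - y) \<bullet> (u - v))"

definition maximal_monotone :: "('a::real_inner \<Rightarrow> 'a set) \<Rightarrow> bool" where
  "maximal_monotone T \<longleftrightarrow> monotone_op T \<and>
     (\<forall>x u. (\<forall>y v. v \<in> T y \<longrightarrow> 0 \<le> (x - y) \<bullet> (u - v)) \<longrightarrow> u \<in> T x)"

definition zeros :: "('a::real_inner \<Rightarrow> 'a set) \<Rightarrow> 'a set" where
  "zeros T = {z. 0 \<in> T z}"

definition self_adjoint_pd :: "('a::real_inner \<Rightarrow> 'a) \<Rightarrow> bool" where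
  "self_adjoint_pd M \<longleftrightarrow> linear M \<and> (\<forall>x y. M x \<bullet> y = x \<bullet> M y) \<and> (\<forall>x. x \<noteq> 0 \<longrightarrow> 0 < x \<bullet> M x)"

definition eigenvalues :: "('a::real_vector \<Rightarrow> 'a) \<Rightarrow> real set" where
  "eigenvalues M = {l. \<exists>v. v \<noteq> 0 \<and> M v = l *\<^sub>R v}"

definition lambda_max :: "('a::real_vector \<Rightarrow> 'a) \<Rightarrow> real" where
  "lambda_max M = Max (eigenvalues M)"

definition lambda_min :: "('a::real_vector \<Rightarrow> 'a) \<Rightarrow> real" where
  "lambda_min M = Min (eigenvalues M)"

definition normM :: "('a::real_inner \<Rightarrow> 'a) \<Rightarrow> 'a \<Rightarrow> real" where
  "normM M z = sqrt (z \<bullet> M z)"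

definition distM :: "('a::real_inner \<Rightarrow> 'a) \<Rightarrow> 'a \<Rightarrow> 'a set \<Rightarrow> real" where
  "distM M z D = Inf ((\<lambda>d. normM M (d - z)) ` D)"

text \<open>Resolvent (I + sigma M^{-1} T)^{-1} evaluated at z.\<close>
definition resolvent :: "('a::real_inner \<Rightarrow> 'a set) \<Rightarrow> ('a \<Rightarrow> 'a) \<Rightarrow> real \<Rightarrow> 'a \<Rightarrow> 'a" where
  "resolvent T M \<sigma> z = (THE w. \<exists>v \<in> T w. z = w + \<sigma> *\<^sub>R inv M v)"

definition IGPPAstep :: "('a::real_inner \<Rightarrow> 'a set) \<Rightarrow> 'a \<Rightarrow> real \<Rightarrow> real \<Rightarrow> real \<Rightarrow> real
    \<Rightarrow> ('a \<Rightarrow> 'a) \<Rightarrow> 'a \<Rightarrow> bool" where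
  "IGPPAstep T z \<sigma> \<eta> \<delta> \<gamma> M zp \<longleftrightarrow>
     (\<exists>w. zp = \<gamma> *\<^sub>R w + (1 - \<gamma>) *\<^sub>R z \<and>
          normM M (w - resolvent T M \<sigma> z) \<le> min \<eta> (\<delta> * normM M (w - z)))"

text \<open>dist(0, T z) is +infinity when T z is empty, so the inequality is only required where T z is nonempty.\<close>
definition bounded_metric_subregular :: "('a::real_inner \<Rightarrow> 'a set) \<Rightarrow> bool" where
  "bounded_metric_subregular T \<longleftrightarrow>
     (\<forall>r>0. \<exists>\<kappa>>0. \<forall>z. norm z \<le> r \<and> T z \<noteq> {} \<longrightarrow> infdist z (zeros T) \<le> \<kappa> * infdist 0 (T z))"

end

theory Submission
  imports Defs
begin

(* Let p be the exact resolvent point of z, so that M (z - p) = sigma v with v in T p.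
   For a zero u of T, firm nonexpansiveness of the resolvent in the M-norm gives
   |z - p|^2 + |p - u|^2 <= |z - u|^2, while metric subregularity at p together with
   |v| <= |z - p|_M / sigma yields a zero u' with sigma |p - u'|_M <= kappa |z - p|_M.
   Balancing these two bounds puts the relaxed exact step gamma p + (1 - gamma) z within the
   square-root factor times |z - u|_M of Omega: for gamma <= 1 compare it with the zero
   (1 - gamma) u + gamma u', for gamma > 1 with u' itself. The relative error
   |w - p|_M <= delta |w - z|_M of the inexact step then costs the delta-terms.
   Subregularity may be used with the single constant kappa_r since all resolvent points stay
   in the ball of radius r: the iterates are Fejer monotone with respect to Omega up to the
   summable errors gamma eta_k.
   That the resolvent is well defined is Minty's theorem, proved here in finite dimensions from
   Brouwer's fixed point theorem (the Debrunner-Flor lemma), Helly's theorem and compactness. *)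

section \<open>Positive definite operators and the \<open>M\<close>-norm\<close>

lemma psd_Cauchy_Schwarz:
  fixes A :: "'a::real_inner \<Rightarrow> 'a"
  assumes lin: "linear A" and sym: "\<And>x y. A x \<bullet> y = x \<bullet> A y" and psd: "\<And>x. 0 \<le> x \<bullet> A x"
  shows "(x \<bullet> A y)\<^sup>2 \<le> (x \<bullet> A x) * (y \<bullet> A y)"
proof -
  define a b c where "a = x \<bullet> A x" and "b = x \<bullet> A y" and "c = y \<bullet> A y"
  have quad: "0 \<le> a + 2 * t * b + t\<^sup>2 * c" for t
  proof -
    have "0 \<le> (x + t *\<^sub>R y) \<bullet> A (x + t *\<^sub>R y)" by (rule psd)
    also have "\<dots> = a + 2 * t * b + t\<^sup>2 * c"
      using sym[of y x] unfolding a_def b_def c_def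
      by (simp add: linear_add[OF lin] linear_cmul[OF lin] inner_add_left inner_add_right
          inner_commute power2_eq_square algebra_simps)
    finally show ?thesis .
  qed
  have "b\<^sup>2 \<le> a * c"
  proof (cases "c = 0")
    case True
    have "b = 0"
    proof (rule ccontr)
      assume "b \<noteq> 0"
      \<comment> \<open>this \<open>t\<close> makes the quadratic equal to \<open>-1\<close>\<close>
      with True quad[of "- (a + 1) / (2 * b)"] show False by (simp add: field_simps)
    qed
    then show ?thesis using True by simp
  next
    case False
    then have "0 < c" using psd[of y] unfolding c_def by simp
    with quad[of "- b / c"] show ?thesis by (simp add: field_simps power2_eq_square)
  qed
  then show ?thesis unfolding a_def b_def c_def .
qed

lemma psd_quadratic_eq_0_imp_eq_0:
  fixes A :: "'a::real_inner \<Rightarrow> 'a"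
  assumes lin: "linear A" and sym: "\<And>x y. A x \<bullet> y = x \<bullet> A y" and psd: "\<And>x. 0 \<le> x \<bullet> A x"
    and u: "u \<bullet> A u = 0"
  shows "A u = 0"
proof -
  have "(u \<bullet> A (A u))\<^sup>2 \<le> (u \<bullet> A u) * (A u \<bullet> A (A u))"
    by (rule psd_Cauchy_Schwarz[OF lin sym psd])
  then have "A u \<bullet> A u = 0" using u sym[of u "A u"] by simp
  then show ?thesis by simp
qed

lemma le_distM:
  assumes "D \<noteq> {}" and "\<And>w. w \<in> D \<Longrightarrow> a \<le> normM M (w - z)"
  shows "a \<le> distM M z D"
  unfolding distM_def using assms by (intro cINF_greatest) auto

context
  fixes M :: "'a::real_inner \<Rightarrow> 'a"
  assumes M: "self_adjoint_pd M"
begin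

lemma self_adjoint_pd_linear: "linear M"
  using M unfolding self_adjoint_pd_def by blast

lemma self_adjoint_pd_sym: "M x \<bullet> y = x \<bullet> M y"
  using M unfolding self_adjoint_pd_def by blast

lemma self_adjoint_pd_pos: "x \<noteq> 0 \<Longrightarrow> 0 < x \<bullet> M x"
  using M unfolding self_adjoint_pd_def by blast

lemmas self_adjoint_pd_linear_simps =
  linear_add[OF self_adjoint_pd_linear] linear_diff[OF self_adjoint_pd_linear]
  linear_cmul[OF self_adjoint_pd_linear] linear_0[OF self_adjoint_pd_linear]

lemma self_adjoint_pd_nonneg: "0 \<le> x \<bullet> M x"
  using self_adjoint_pd_pos[of x] by (cases "x = 0") (auto simp: self_adjoint_pd_linear_simps)

lemma self_adjoint_pd_inner_commute: "y \<bullet> M x = x \<bullet> M y"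
  using self_adjoint_pd_sym[of y x] by (simp add: inner_commute)

lemma normM_nonneg: "0 \<le> normM M x"
  unfolding normM_def by (simp add: self_adjoint_pd_nonneg)

lemma normM_power2: "(normM M x)\<^sup>2 = x \<bullet> M x"
  unfolding normM_def by (simp add: self_adjoint_pd_nonneg)

lemma normM_scaleR: "normM M (c *\<^sub>R x) = \<bar>c\<bar> * normM M x"
proof -
  have "(c *\<^sub>R x) \<bullet> M (c *\<^sub>R x) = c\<^sup>2 * (x \<bullet> M x)"
    by (simp add: self_adjoint_pd_linear_simps power2_eq_square)
  then show ?thesis unfolding normM_def by (simp add: real_sqrt_mult)
qed

lemma normM_minus_commute: "normM M (x - y) = normM M (y - x)"
  using normM_scaleR[of "-1" "x - y"] by simp

lemma inner_M_le_normM: "x \<bullet> M y \<le> normM M x * normM M y"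
proof (rule power2_le_imp_le)
  show "(x \<bullet> M y)\<^sup>2 \<le> (normM M x * normM M y)\<^sup>2"
    using psd_Cauchy_Schwarz[OF self_adjoint_pd_linear self_adjoint_pd_sym self_adjoint_pd_nonneg]
    by (simp add: power_mult_distrib normM_power2)
qed (simp add: normM_nonneg)

lemma normM_add_power2:
  "(normM M (x + y))\<^sup>2 = (normM M x)\<^sup>2 + 2 * (x \<bullet> M y) + (normM M y)\<^sup>2"
  unfolding normM_power2 using self_adjoint_pd_inner_commute[where x = x and y = y]
  by (simp add: self_adjoint_pd_linear_simps inner_add_left inner_add_right)

lemma normM_triangle: "normM M (x + y) \<le> normM M x + normM M y"
proof (rule power2_le_imp_le)
  show "(normM M (x + y))\<^sup>2 \<le> (normM M x + normM M y)\<^sup>2"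
    using inner_M_le_normM[of x y] by (simp add: normM_add_power2 power2_sum)
qed (simp add: normM_nonneg)

lemma normM_convex_comb_power2:
  "(normM M ((1 - g) *\<^sub>R a + g *\<^sub>R b))\<^sup>2
    = (1 - g) * (normM M a)\<^sup>2 + g * (normM M b)\<^sup>2 - g * (1 - g) * (normM M (a - b))\<^sup>2"
  unfolding normM_power2 using self_adjoint_pd_inner_commute[where x = a and y = b]
  by (simp add: self_adjoint_pd_linear_simps inner_add_left inner_add_right
      inner_diff_left inner_diff_right algebra_simps power2_eq_square)

lemma distM_le: "w \<in> D \<Longrightarrow> distM M z D \<le> normM M (w - z)"
  unfolding distM_def by (rule cINF_lower) (auto intro: bdd_belowI[of _ 0] simp: normM_nonneg)

lemma extremal_quadratic_imp_eigenvalue: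
  assumes u: "u \<bullet> u = 1" and s: "s \<noteq> 0"
    and extremal: "\<And>x. 0 \<le> s * (x \<bullet> M x - (u \<bullet> M u) * (x \<bullet> x))"
  shows "u \<bullet> M u \<in> eigenvalues M"
proof -
  define \<mu> where "\<mu> = u \<bullet> M u"
  define A where "A = (\<lambda>x. s *\<^sub>R (M x - \<mu> *\<^sub>R x))"
  have "A u = 0"
  proof (rule psd_quadratic_eq_0_imp_eq_0[where A = A])
    show "linear A"
      unfolding A_def by (rule linearI) (simp_all add: self_adjoint_pd_linear_simps algebra_simps)
    show "A x \<bullet> y = x \<bullet> A y" for x y
      unfolding A_def using self_adjoint_pd_sym[of x y]
      by (simp add: inner_diff_left inner_diff_right inner_commute)
    show "0 \<le> x \<bullet> A x" for x
      using extremal[of x] unfolding A_def \<mu>_def by (simp add: inner_diff_right)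
    show "u \<bullet> A u = 0"
      unfolding A_def \<mu>_def using u by (simp add: inner_diff_right)
  qed
  then have "M u = \<mu> *\<^sub>R u" using s unfolding A_def by simp
  moreover have "u \<noteq> 0" using u by auto
  ultimately show ?thesis unfolding eigenvalues_def \<mu>_def by blast
qed

lemma eigenvalue_pos: "l \<in> eigenvalues M \<Longrightarrow> 0 < l"
proof -
  assume "l \<in> eigenvalues M"
  then obtain v where v: "v \<noteq> 0" "M v = l *\<^sub>R v" unfolding eigenvalues_def by blast
  then have "0 < l * (v \<bullet> v)" using self_adjoint_pd_pos[OF v(1)] by simp
  moreover have "0 < v \<bullet> v" using v(1) by simp
  ultimately show "0 < l" by (rule zero_less_mult_pos2)
qed

end

lemma le_mult_distM:
  assumes M: "self_adjoint_pd M" and D: "D \<noteq> {}"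
    and bound: "\<And>u. u \<in> D \<Longrightarrow> a \<le> \<rho> * normM M (u - z)"
  shows "a \<le> \<rho> * distM M z D"
proof (cases "\<rho> \<le> 0")
  case True
  obtain u where u: "u \<in> D" using D by blast
  have "\<rho> * normM M (u - z) \<le> \<rho> * distM M z D"
    using distM_le[OF M u] True by (rule mult_left_mono_neg)
  then show ?thesis using bound[OF u] by linarith
next
  case False
  have "a / \<rho> \<le> normM M (u - z)" if "u \<in> D" for u
    using bound[OF that] False by (simp add: divide_le_eq mult.commute)
  then have "a / \<rho> \<le> distM M z D" by (rule le_distM[OF D])
  then show ?thesis using False by (simp add: divide_le_eq mult.commute)
qed

context
  fixes M :: "'a::euclidean_space \<Rightarrow> 'a"
  assumes M: "self_adjoint_pd M"
begin

lemma self_adjoint_pd_inj: "inj M"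
proof (rule injI)
  fix x y assume "M x = M y"
  then have "(x - y) \<bullet> M (x - y) = 0" by (simp add: self_adjoint_pd_linear_simps[OF M])
  then show "x = y" using self_adjoint_pd_pos[OF M, of "x - y"] by (cases "x = y") auto
qed

lemma self_adjoint_pd_inv: "M (inv M y) = y"
  using linear_injective_imp_surjective[OF self_adjoint_pd_linear[OF M] self_adjoint_pd_inj]
  by (simp add: surj_f_inv_f)

lemma eigenvalues_finite: "finite (eigenvalues M)"
proof -
  define ev where "ev l = (SOME v. v \<noteq> 0 \<and> M v = l *\<^sub>R v)" for l
  have ev: "ev l \<noteq> 0 \<and> M (ev l) = l *\<^sub>R ev l" if "l \<in> eigenvalues M" for l
    unfolding ev_def by (rule someI_ex) (use that in \<open>simp add: eigenvalues_def\<close>)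
  have inj: "inj_on ev (eigenvalues M)"
  proof (rule inj_onI)
    fix l1 l2 assume l: "l1 \<in> eigenvalues M" "l2 \<in> eigenvalues M" "ev l1 = ev l2"
    then have "l1 *\<^sub>R ev l1 = l2 *\<^sub>R ev l1" using ev[OF l(1)] ev[OF l(2)] by metis
    then show "l1 = l2" using ev[OF l(1)] by simp
  qed
  have "pairwise orthogonal (ev ` eigenvalues M)"
  proof (rule pairwiseI)
    fix a b assume "a \<in> ev ` eigenvalues M" "b \<in> ev ` eigenvalues M" "a \<noteq> b"
    then obtain l1 l2 where l: "l1 \<in> eigenvalues M" "l2 \<in> eigenvalues M" "a = ev l1" "b = ev l2" "l1 \<noteq> l2"
      by blast
    have "l1 * (a \<bullet> b) = a \<bullet> M b" using ev[OF l(1)] l(3) self_adjoint_pd_sym[OF M, of a b] by simp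
    also have "\<dots> = l2 * (a \<bullet> b)" using ev[OF l(2)] l(4) by simp
    finally show "orthogonal a b" using l(5) by (simp add: orthogonal_def)
  qed
  moreover have "0 \<notin> ev ` eigenvalues M" using ev by auto
  ultimately have "finite (ev ` eigenvalues M)"
    using pairwise_orthogonal_independent independent_bound by blast
  then show ?thesis using finite_imageD inj by blast
qed

lemma quadratic_form_on_sphere:
  assumes "x \<noteq> 0"
  shows "x /\<^sub>R norm x \<in> sphere 0 1"
    and "x \<bullet> M x = (x \<bullet> x) * ((x /\<^sub>R norm x) \<bullet> M (x /\<^sub>R norm x))"
  using assms by (simp_all add: self_adjoint_pd_linear_simps[OF M] dot_square_norm field_simps power2_eq_square)

lemma sphere_bound_imp_quadratic_bound:
  assumes "\<And>y. y \<in> sphere 0 1 \<Longrightarrow> 0 \<le> s * (y \<bullet> M y - c)"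
  shows "0 \<le> s * (x \<bullet> M x - c * (x \<bullet> x))"
proof (cases "x = 0")
  case False
  define y where "y = x /\<^sub>R norm x"
  have "s * (x \<bullet> M x - c * (x \<bullet> x)) = (x \<bullet> x) * (s * (y \<bullet> M y - c))"
    using quadratic_form_on_sphere(2)[OF False] unfolding y_def by (simp add: algebra_simps)
  also have "0 \<le> \<dots>"
    using assms[OF quadratic_form_on_sphere(1)[OF False, folded y_def]]
    by (rule mult_nonneg_nonneg[OF inner_ge_zero])
  finally show ?thesis .
qed (simp add: self_adjoint_pd_linear_simps[OF M])

lemma ex_eigenvalue_bound:
  assumes s: "s \<noteq> 0"
  shows "\<exists>\<mu>\<in>eigenvalues M. \<forall>x. 0 \<le> s * (x \<bullet> M x - \<mu> * (x \<bullet> x))"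
proof -
  have "continuous_on (sphere 0 1) (\<lambda>y. s * (y \<bullet> M y))"
    using linear_continuous_on[OF linear_conv_bounded_linear[THEN iffD1, OF self_adjoint_pd_linear[OF M]]]
    by (intro continuous_intros) auto
  moreover have "sphere (0::'a) 1 \<noteq> {}" by simp
  ultimately obtain u where u: "u \<in> sphere 0 1" "\<forall>y\<in>sphere 0 1. s * (u \<bullet> M u) \<le> s * (y \<bullet> M y)"
    using continuous_attains_inf[OF compact_sphere] by blast
  have bound: "0 \<le> s * (x \<bullet> M x - (u \<bullet> M u) * (x \<bullet> x))" for x
    by (rule sphere_bound_imp_quadratic_bound) (use u(2) in \<open>auto simp: right_diff_distrib\<close>)
  moreover have "u \<bullet> M u \<in> eigenvalues M"
    using extremal_quadratic_imp_eigenvalue[OF M _ s bound] u(1) by (simp add: dot_square_norm)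
  ultimately show ?thesis by blast
qed

lemma lambda_min_pos: "0 < lambda_min M"
proof -
  have "eigenvalues M \<noteq> {}" using ex_eigenvalue_bound[of 1] by auto
  then have "lambda_min M \<in> eigenvalues M"
    unfolding lambda_min_def by (rule Min_in[OF eigenvalues_finite])
  then show ?thesis by (rule eigenvalue_pos[OF M])
qed

lemma lambda_min_le_quadratic: "lambda_min M * (x \<bullet> x) \<le> x \<bullet> M x"
proof -
  obtain \<mu> where "\<mu> \<in> eigenvalues M" "\<mu> * (x \<bullet> x) \<le> x \<bullet> M x"
    using ex_eigenvalue_bound[of 1] by auto
  moreover have "lambda_min M \<le> \<mu>"
    unfolding lambda_min_def using Min_le[OF eigenvalues_finite \<open>\<mu> \<in> eigenvalues M\<close>] .
  ultimately show ?thesis by (meson inner_ge_zero mult_right_mono order_trans)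
qed

lemma quadratic_le_lambda_max: "x \<bullet> M x \<le> lambda_max M * (x \<bullet> x)"
proof -
  obtain \<mu> where "\<mu> \<in> eigenvalues M" "x \<bullet> M x \<le> \<mu> * (x \<bullet> x)"
    using ex_eigenvalue_bound[of "-1"] by auto
  moreover have "\<mu> \<le> lambda_max M"
    unfolding lambda_max_def using Max_ge[OF eigenvalues_finite \<open>\<mu> \<in> eigenvalues M\<close>] .
  ultimately show ?thesis by (meson inner_ge_zero mult_right_mono order_trans)
qed

lemma lambda_min_le_lambda_max: "lambda_min M \<le> lambda_max M"
proof -
  obtain \<mu> where "\<mu> \<in> eigenvalues M" using ex_eigenvalue_bound[of 1] by auto
  then have "lambda_min M \<le> \<mu>" "\<mu> \<le> lambda_max M"
    unfolding lambda_min_def lambda_max_def using eigenvalues_finite by auto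
  then show ?thesis by linarith
qed

lemma sqrt_lambda_min_norm_le_normM: "sqrt (lambda_min M) * norm x \<le> normM M x"
  unfolding normM_def norm_eq_sqrt_inner real_sqrt_mult[symmetric]
  by (rule real_sqrt_le_mono[OF lambda_min_le_quadratic])

lemma normM_le_sqrt_lambda_max_norm: "normM M x \<le> sqrt (lambda_max M) * norm x"
  unfolding normM_def norm_eq_sqrt_inner real_sqrt_mult[symmetric]
  by (rule real_sqrt_le_mono[OF quadratic_le_lambda_max])

lemma norm_M_le_normM: "norm (M x) \<le> sqrt (lambda_max M) * normM M x"
proof -
  have "(norm (M x))\<^sup>2 = x \<bullet> M (M x)"
    by (simp add: dot_square_norm[symmetric] self_adjoint_pd_sym[OF M])
  also have "\<dots> \<le> normM M x * normM M (M x)" by (rule inner_M_le_normM[OF M])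
  also have "\<dots> \<le> normM M x * (sqrt (lambda_max M) * norm (M x))"
    by (intro mult_left_mono normM_le_sqrt_lambda_max_norm normM_nonneg[OF M])
  finally have "norm (M x) * norm (M x) \<le> (sqrt (lambda_max M) * normM M x) * norm (M x)"
    by (simp add: power2_eq_square algebra_simps)
  moreover have "0 \<le> sqrt (lambda_max M) * normM M x"
    using lambda_min_pos lambda_min_le_lambda_max normM_nonneg[OF M, of x] by simp
  ultimately show ?thesis
    by (cases "norm (M x) = 0") (auto intro: mult_right_le_imp_le)
qed

end

lemma lambda_min_norm_le_normM:
  fixes M :: "'a::euclidean_space \<Rightarrow> 'a"
  assumes M: "self_adjoint_pd M" and M_max: "lambda_max M = 1"
  shows "lambda_min M * norm x \<le> normM M x"
proof -
  have "0 < lambda_min M" "lambda_min M \<le> 1"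
    using lambda_min_pos[OF M] lambda_min_le_lambda_max[OF M] M_max by simp_all
  then have "lambda_min M \<le> sqrt (lambda_min M)"
    by (intro real_le_rsqrt) (simp add: power2_eq_square mult_le_cancel_left1)
  then have "lambda_min M * norm x \<le> sqrt (lambda_min M) * norm x" by (rule mult_right_mono) simp
  also have "\<dots> \<le> normM M x" by (rule sqrt_lambda_min_norm_le_normM[OF M])
  finally show ?thesis .
qed

section \<open>Minty's theorem\<close>

lemma maximal_monotone_monotone: "maximal_monotone T \<Longrightarrow> monotone_op T"
  unfolding maximal_monotone_def by blast

lemma monotone_opD: "monotone_op T \<Longrightarrow> u \<in> T x \<Longrightarrow> v \<in> T y \<Longrightarrow> 0 \<le> (x - y) \<bullet> (u - v)"
  unfolding monotone_op_def by blast

lemma maximal_monotoneD: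
  "maximal_monotone T \<Longrightarrow> (\<And>y v. v \<in> T y \<Longrightarrow> 0 \<le> (x - y) \<bullet> (u - v)) \<Longrightarrow> u \<in> T x"
  unfolding maximal_monotone_def by blast

text \<open>If the graph were empty, maximality would put every pair into it.\<close>
lemma maximal_monotone_graph_nonempty: "maximal_monotone T \<Longrightarrow> \<exists>y v. v \<in> T y"
  using maximal_monotoneD by blast

lemma zeros_eq_Inter_halfspaces:
  assumes "maximal_monotone T"
  shows "zeros T = (\<Inter>p\<in>{(y, v). v \<in> T y}. {x. snd p \<bullet> x \<le> snd p \<bullet> fst p})"
proof (intro equalityI subsetI)
  fix x assume x: "x \<in> zeros T"
  have "v \<bullet> x \<le> v \<bullet> y" if "v \<in> T y" for y v
  proof -
    have "0 \<le> (x - y) \<bullet> (0 - v)"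
      using monotone_opD[OF maximal_monotone_monotone[OF assms] _ that] x unfolding zeros_def by blast
    then show ?thesis by (simp add: inner_diff_left inner_diff_right inner_commute)
  qed
  then show "x \<in> (\<Inter>p\<in>{(y, v). v \<in> T y}. {x. snd p \<bullet> x \<le> snd p \<bullet> fst p})"
    by auto
next
  fix x assume x: "x \<in> (\<Inter>p\<in>{(y, v). v \<in> T y}. {x. snd p \<bullet> x \<le> snd p \<bullet> fst p})"
  have "0 \<le> (x - y) \<bullet> (0 - v)" if "v \<in> T y" for y v
  proof -
    have "v \<bullet> x \<le> v \<bullet> y" using x that by auto
    then show ?thesis by (simp add: inner_diff_left inner_diff_right inner_commute)
  qed
  then show "x \<in> zeros T" unfolding zeros_def using maximal_monotoneD[OF assms] by blast
qed

lemma closed_zeros: "maximal_monotone T \<Longrightarrow> closed (zeros T)"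
  by (simp add: zeros_eq_Inter_halfspaces closed_INT closed_halfspace_le)

lemma convex_zeros: "maximal_monotone T \<Longrightarrow> convex (zeros T)"
  by (simp add: zeros_eq_Inter_halfspaces convex_INT convex_halfspace_le)

text \<open>Barycentric coordinates with respect to the vertices \<open>insert 0 Basis\<close> of the standard simplex.\<close>
definition simplex_coord :: "'a::euclidean_space \<Rightarrow> 'a \<Rightarrow> real" where
  "simplex_coord s a = (if a = 0 then 1 - (\<Sum>b\<in>Basis. s \<bullet> b) else s \<bullet> a)"

lemma sum_simplex_coord: "(\<Sum>a\<in>insert 0 Basis. simplex_coord s a) = 1"
proof -
  have "(\<Sum>b\<in>Basis. simplex_coord s b) = (\<Sum>b\<in>Basis. s \<bullet> b)"
    by (intro sum.cong) (auto simp: simplex_coord_def zero_not_in_Basis)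
  then show ?thesis by (simp add: zero_not_in_Basis simplex_coord_def)
qed

lemma mem_std_simplex_iff:
  "s \<in> convex hull (insert 0 Basis) \<longleftrightarrow> (\<forall>a\<in>insert 0 Basis. 0 \<le> simplex_coord s a)"
proof -
  have "simplex_coord s a = s \<bullet> a" if "a \<in> Basis" for a
    using that by (simp add: simplex_coord_def nonzero_Basis)
  then show ?thesis unfolding std_simplex by (simp add: simplex_coord_def[of s 0] conj_commute)
qed

lemma continuous_on_simplex_coord: "continuous_on S (\<lambda>s. simplex_coord s a)"
  unfolding simplex_coord_def by (cases "a = 0") (simp_all add: continuous_intros)

lemma proportional_weights_nonneg:
  fixes \<beta> g :: "'i \<Rightarrow> real"
  assumes V: "finite V" and \<beta>: "\<And>a. a \<in> V \<Longrightarrow> 0 \<le> \<beta> a" "sum \<beta> V = 1"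
    and avg: "0 \<le> (\<Sum>a\<in>V. \<beta> a * g a)"
    and proportional: "\<And>a. a \<in> V \<Longrightarrow> \<beta> a * (\<Sum>c\<in>V. max 0 (- g c)) = max 0 (- g a)"
  shows "\<forall>a\<in>V. 0 \<le> g a"
proof -
  define m where "m = (\<Sum>c\<in>V. max 0 (- g c))"
  have "m = 0"
  proof (rule ccontr)
    assume "m \<noteq> 0"
    then have m: "0 < m" unfolding m_def by (simp add: order_less_le sum_nonneg)
    have "\<beta> a * g a = - m * (\<beta> a)\<^sup>2" if "a \<in> V" for a
    proof (cases "g a < 0")
      case True
      then have "g a = - (\<beta> a * m)" using proportional[OF that] unfolding m_def by simp
      then show ?thesis by (simp add: power2_eq_square)
    next
      case False
      then have "\<beta> a * m = 0" using proportional[OF that] unfolding m_def by simp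
      then show ?thesis using m by simp
    qed
    then have "(\<Sum>a\<in>V. \<beta> a * g a) = - m * (\<Sum>a\<in>V. (\<beta> a)\<^sup>2)"
      by (simp add: sum_distrib_left)
    moreover obtain a where "a \<in> V" "\<beta> a \<noteq> 0" using \<beta>(2) by (metis sum.neutral zero_neq_one)
    then have "0 < (\<Sum>a\<in>V. (\<beta> a)\<^sup>2)" using V by (intro sum_pos2) auto
    ultimately show False using avg mult_pos_pos[OF m] by fastforce
  qed
  then have "\<forall>a\<in>V. max 0 (- g a) = 0" using V unfolding m_def by (simp add: sum_nonneg_eq_0_iff)
  then show ?thesis by (auto simp: max_def split: if_splits)
qed

lemma simplex_coord_shift:
  fixes m :: "'a::euclidean_space \<Rightarrow> real"
  defines "D \<equiv> 1 + (\<Sum>c\<in>insert 0 Basis. m c)"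
  assumes D: "0 < D" and a: "a \<in> insert 0 Basis"
  shows "simplex_coord (\<Sum>b\<in>Basis. ((s \<bullet> b + m b) / D) *\<^sub>R b) a = (simplex_coord s a + m a) / D"
proof (cases "a = 0")
  case True
  have D_split: "D = 1 + m 0 + (\<Sum>b\<in>Basis. m b)"
    unfolding D_def by (simp add: zero_not_in_Basis)
  have "simplex_coord (\<Sum>b\<in>Basis. ((s \<bullet> b + m b) / D) *\<^sub>R b) a
      = 1 - ((\<Sum>b\<in>Basis. s \<bullet> b) + (\<Sum>b\<in>Basis. m b)) / D"
    unfolding True by (simp add: simplex_coord_def sum_divide_distrib[symmetric] sum.distrib)
  also have "\<dots> = (simplex_coord s a + m a) / D"
    unfolding True simplex_coord_def using D by (simp add: D_split field_simps)
  finally show ?thesis .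
next
  case False
  then have "a \<in> Basis" using a by simp
  then show ?thesis by (simp add: simplex_coord_def nonzero_Basis)
qed

text \<open>The fixed point given by Brouwer's theorem for the map that raises each barycentric
  coordinate by \<open>m a\<close> and renormalises.\<close>
lemma std_simplex_proportional_point:
  fixes m :: "'a::euclidean_space \<Rightarrow> 'a \<Rightarrow> real"
  assumes cont: "\<And>a. continuous_on (convex hull (insert 0 Basis)) (m a)"
    and nonneg: "\<And>a s. 0 \<le> m a s"
  shows "\<exists>s\<in>convex hull (insert 0 Basis). \<forall>a\<in>insert 0 Basis.
    simplex_coord s a * (\<Sum>c\<in>insert 0 Basis. m c s) = m a s"
proof -
  define V :: "'a set" where "V = insert 0 Basis"
  define \<Delta> where "\<Delta> = convex hull V"
  define D where "D s = 1 + (\<Sum>a\<in>V. m a s)" for s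
  define \<Phi> where "\<Phi> s = (\<Sum>b\<in>Basis. ((s \<bullet> b + m b s) / D s) *\<^sub>R b)" for s
  have V: "finite V" "0 \<in> V" unfolding V_def by simp_all
  have D_pos: "0 < D s" for s
    unfolding D_def using V nonneg by (simp add: add_pos_nonneg sum_nonneg)
  have coord_\<Phi>: "simplex_coord (\<Phi> s) a = (simplex_coord s a + m a s) / D s" if "a \<in> V" for s a
    using simplex_coord_shift[of "\<lambda>c. m c s" a s] D_pos[of s] that unfolding \<Phi>_def D_def V_def by simp
  have "continuous_on \<Delta> (m a)" for a
    unfolding \<Delta>_def V_def by (rule cont)
  then have "continuous_on \<Delta> D"
    unfolding D_def by (intro continuous_intros)
  then have "continuous_on \<Delta> \<Phi>"
    unfolding \<Phi>_def using \<open>continuous_on \<Delta> (m _)\<close> D_pos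
    by (intro continuous_intros) (auto simp: less_le)
  moreover have "\<Phi> \<in> \<Delta> \<rightarrow> \<Delta>"
  proof
    fix s assume "s \<in> \<Delta>"
    then show "\<Phi> s \<in> \<Delta>"
      using D_pos[of s] unfolding \<Delta>_def V_def mem_std_simplex_iff
      by (auto simp: coord_\<Phi>[unfolded V_def] nonneg intro!: divide_nonneg_pos add_nonneg_nonneg)
  qed
  moreover have "compact \<Delta>" "convex \<Delta>" "\<Delta> \<noteq> {}"
    unfolding \<Delta>_def using V by (auto simp: finite_imp_compact_convex_hull)
  ultimately obtain s where s: "s \<in> \<Delta>" "\<Phi> s = s" using brouwer by metis
  have "simplex_coord s a * (\<Sum>c\<in>V. m c s) = m a s" if "a \<in> V" for a
    using coord_\<Phi>[OF that, of s] s(2) D_pos[of s] unfolding D_def by (simp add: field_simps)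
  with s(1) show ?thesis unfolding \<Delta>_def V_def by blast
qed

lemma std_simplex_inequalities:
  fixes g :: "'a::euclidean_space \<Rightarrow> 'a \<Rightarrow> real"
  assumes cont: "\<And>a. continuous_on (convex hull (insert 0 Basis)) (g a)"
    and avg: "\<And>s. s \<in> convex hull (insert 0 Basis) \<Longrightarrow>
      0 \<le> (\<Sum>a\<in>insert 0 Basis. simplex_coord s a * g a s)"
  shows "\<exists>s\<in>convex hull (insert 0 Basis). \<forall>a\<in>insert 0 Basis. 0 \<le> g a s"
proof -
  have "continuous_on (convex hull (insert 0 Basis)) (\<lambda>s. max 0 (- g a s))" for a
    by (intro continuous_intros cont)
  from std_simplex_proportional_point[of "\<lambda>a s. max 0 (- g a s)", OF this max.cobounded1]
  obtain s where s: "s \<in> convex hull (insert 0 Basis)"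
    and proportional: "\<forall>a\<in>insert 0 Basis.
      simplex_coord s a * (\<Sum>c\<in>insert 0 Basis. max 0 (- g c s)) = max 0 (- g a s)"
    by blast
  have "\<forall>a\<in>insert 0 Basis. 0 \<le> g a s"
    using s avg[OF s] proportional sum_simplex_coord[of s]
    by (intro proportional_weights_nonneg[of _ "\<lambda>a. simplex_coord s a"]) (auto simp: mem_std_simplex_iff)
  with s show ?thesis by blast
qed

text \<open>The \<open>F\<close>-part vanishes because \<open>x\<close> is the \<open>\<beta>\<close>-average of the \<open>Y a\<close>; symmetrising the
  remaining double sum produces the monotonicity pairings.\<close>
lemma monotone_average_nonneg:
  fixes Y W :: "'i \<Rightarrow> 'a::real_inner" and \<beta> :: "'i \<Rightarrow> real"
  assumes V: "finite V" and \<beta>: "\<And>a. a \<in> V \<Longrightarrow> 0 \<le> \<beta> a" "sum \<beta> V = 1"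
    and mono: "\<And>a b. a \<in> V \<Longrightarrow> b \<in> V \<Longrightarrow> 0 \<le> (Y a - Y b) \<bullet> (W a - W b)"
    and x: "x = (\<Sum>a\<in>V. \<beta> a *\<^sub>R Y a)"
  shows "0 \<le> (\<Sum>a\<in>V. \<beta> a * ((F - W a) \<bullet> (x - Y a)))"
proof -
  have x_diff: "x - Y a = (\<Sum>c\<in>V. \<beta> c *\<^sub>R (Y c - Y a))" for a
    unfolding x using \<beta>(2) by (simp add: scaleR_diff_right sum_subtractf scaleR_sum_left[symmetric])
  have F_part: "(\<Sum>a\<in>V. \<beta> a *\<^sub>R (x - Y a)) = 0"
    unfolding scaleR_diff_right sum_subtractf scaleR_sum_left[symmetric] x[symmetric] using \<beta>(2) by simp
  define P where "P = (\<Sum>a\<in>V. \<Sum>c\<in>V. \<beta> a * \<beta> c * (W a \<bullet> (Y c - Y a)))"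
  define P' where "P' = (\<Sum>a\<in>V. \<Sum>c\<in>V. \<beta> a * \<beta> c * (W c \<bullet> (Y a - Y c)))"
  have "P = P'"
    unfolding P_def P'_def by (subst sum.swap) (simp add: mult.commute mult.left_commute)
  have "P + P' = (\<Sum>a\<in>V. \<Sum>c\<in>V. - (\<beta> a * \<beta> c * ((Y a - Y c) \<bullet> (W a - W c))))"
    unfolding P_def P'_def sum.distrib[symmetric]
    by (intro sum.cong refl) (simp add: algebra_simps inner_diff_left inner_diff_right inner_commute)
  also have "\<dots> \<le> 0"
    using \<beta>(1) mono by (intro sum_nonpos) (simp add: sum_nonpos)
  finally have "P \<le> 0" using \<open>P = P'\<close> by simp
  have "(\<Sum>a\<in>V. \<beta> a * ((F - W a) \<bullet> (x - Y a)))
      = F \<bullet> (\<Sum>a\<in>V. \<beta> a *\<^sub>R (x - Y a)) - (\<Sum>a\<in>V. \<beta> a * (W a \<bullet> (x - Y a)))"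
    by (simp add: inner_sum_right inner_diff_left algebra_simps sum_subtractf sum.distrib)
  also have "(\<Sum>a\<in>V. \<beta> a * (W a \<bullet> (x - Y a))) = P"
    unfolding P_def x_diff by (simp add: inner_sum_right sum_distrib_left mult.assoc)
  finally show ?thesis using F_part \<open>P \<le> 0\<close> by simp
qed

lemma Debrunner_Flor_family:
  fixes F Y W :: "'a::euclidean_space \<Rightarrow> 'a"
  assumes contF: "continuous_on UNIV F"
    and mono: "\<And>a b. a \<in> insert 0 Basis \<Longrightarrow> b \<in> insert 0 Basis \<Longrightarrow> 0 \<le> (Y a - Y b) \<bullet> (W a - W b)"
  shows "\<exists>x. \<forall>a\<in>insert 0 Basis. 0 \<le> (F x - W a) \<bullet> (x - Y a)"
proof -
  define X where "X s = (\<Sum>a\<in>insert 0 Basis. simplex_coord s a *\<^sub>R Y a)" for s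
  have contX: "continuous_on S X" for S
    unfolding X_def by (intro continuous_intros continuous_on_simplex_coord)
  have "\<exists>s\<in>convex hull (insert 0 Basis). \<forall>a\<in>insert 0 Basis. 0 \<le> (F (X s) - W a) \<bullet> (X s - Y a)"
  proof (rule std_simplex_inequalities)
    show "continuous_on (convex hull (insert 0 Basis)) (\<lambda>s. (F (X s) - W a) \<bullet> (X s - Y a))" for a
      by (intro continuous_intros contX continuous_on_compose2[OF contF contX]) auto
    show "0 \<le> (\<Sum>a\<in>insert 0 Basis. simplex_coord s a * ((F (X s) - W a) \<bullet> (X s - Y a)))"
      if "s \<in> convex hull (insert 0 Basis)" for s
      using that by (intro monotone_average_nonneg mono)
        (auto simp: mem_std_simplex_iff sum_simplex_coord X_def)
  qed
  then show ?thesis by blast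
qed

lemma ex_image_eq_if_card_le:
  assumes "finite A" "finite B" "B \<noteq> {}" "card B \<le> card A"
  shows "\<exists>h. h ` A = B"
proof -
  obtain f where f: "f ` B \<subseteq> A" "inj_on f B" using card_le_inj[OF assms(2,1,4)] by blast
  obtain b0 where b0: "b0 \<in> B" using assms(3) by blast
  define h where "h a = (if a \<in> f ` B then inv_into B f a else b0)" for a
  have "h ` A \<subseteq> B" using b0 by (auto simp: h_def inv_into_into)
  moreover have "B \<subseteq> h ` A"
  proof
    fix b assume "b \<in> B"
    then have "h (f b) = b" using f(2) by (simp add: h_def)
    then show "b \<in> h ` A" using f(1) \<open>b \<in> B\<close> by (metis image_eqI image_subset_iff)
  qed
  ultimately show ?thesis by blast
qed

text \<open>The at most \<open>DIM('a) + 1\<close> pairs are indexed, with repetitions, by the vertices of the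
  standard simplex.\<close>
lemma Debrunner_Flor:
  fixes F :: "'a::euclidean_space \<Rightarrow> 'a" and P :: "('a \<times> 'a) set"
  assumes contF: "continuous_on UNIV F" and P: "finite P" "card P \<le> DIM('a) + 1"
    and mono: "\<And>y v y' v'. (y, v) \<in> P \<Longrightarrow> (y', v') \<in> P \<Longrightarrow> 0 \<le> (y - y') \<bullet> (v - v')"
  shows "\<exists>x. \<forall>(y, v)\<in>P. 0 \<le> (F x - v) \<bullet> (x - y)"
proof (cases "P = {}")
  case False
  have fin: "finite (insert (0::'a) Basis)" by simp
  have card: "card P \<le> card (insert (0::'a) Basis)" using P(2) by (simp add: zero_not_in_Basis)
  from ex_image_eq_if_card_le[OF fin P(1) False card]
  obtain h where h: "h ` insert (0::'a) Basis = P" ..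
  have "\<exists>x. \<forall>a\<in>insert 0 Basis. 0 \<le> (F x - snd (h a)) \<bullet> (x - fst (h a))"
  proof (rule Debrunner_Flor_family[OF contF])
    fix a b :: 'a assume ab: "a \<in> insert 0 Basis" "b \<in> insert 0 Basis"
    have "h a \<in> P" "h b \<in> P"
      using imageI[OF ab(1), of h] imageI[OF ab(2), of h] unfolding h .
    then show "0 \<le> (fst (h a) - fst (h b)) \<bullet> (snd (h a) - snd (h b))"
      using mono[of "fst (h a)" "snd (h a)" "fst (h b)" "snd (h b)"] by simp
  qed
  then obtain x where x: "\<forall>a\<in>insert 0 Basis. 0 \<le> (F x - snd (h a)) \<bullet> (x - fst (h a))" by blast
  have "0 \<le> (F x - v) \<bullet> (x - y)" if "(y, v) \<in> P" for y v
  proof -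
    from that obtain a where "a \<in> insert 0 Basis" "h a = (y, v)" unfolding h[symmetric] by (metis imageE)
    then show ?thesis using x by fastforce
  qed
  then show ?thesis by blast
qed simp

lemma convex_monotone_inequality_set:
  fixes L :: "'a::real_inner \<Rightarrow> 'a"
  assumes lin: "linear L" and psd: "\<And>x. 0 \<le> x \<bullet> L x"
  shows "convex {x. 0 \<le> (c - L x - v) \<bullet> (x - y)}"
proof (rule convexI)
  define f where "f x = (c - v) \<bullet> (x - y) + L x \<bullet> y" for x
  have split: "(c - L x - v) \<bullet> (x - y) = f x - L x \<bullet> x" for x
    unfolding f_def by (simp add: inner_diff_left inner_diff_right algebra_simps)
  fix x1 x2 and u w :: real
  assume h: "x1 \<in> {x. 0 \<le> (c - L x - v) \<bullet> (x - y)}" "x2 \<in> {x. 0 \<le> (c - L x - v) \<bullet> (x - y)}"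
    and uw: "0 \<le> u" "0 \<le> w" "u + w = 1"
  define z where "z = u *\<^sub>R x1 + w *\<^sub>R x2"
  define Q where "Q = L (x1 - x2) \<bullet> (x1 - x2)"
  have w: "w = 1 - u" using uw(3) by simp
  have fz: "f z = u * f x1 + w * f x2"
    unfolding f_def z_def w
    by (simp add: linear_add[OF lin] linear_cmul[OF lin] linear_diff[OF lin] inner_add_left
        inner_diff_left inner_diff_right algebra_simps)
  have Lz: "L z \<bullet> z = u * (L x1 \<bullet> x1) + w * (L x2 \<bullet> x2) - u * w * Q"
    unfolding z_def Q_def w
    by (simp add: linear_add[OF lin] linear_cmul[OF lin] linear_diff[OF lin] inner_add_left
        inner_add_right inner_diff_left inner_diff_right algebra_simps power2_eq_square)
  have "(c - L z - v) \<bullet> (z - y) = u * (f x1 - L x1 \<bullet> x1) + w * (f x2 - L x2 \<bullet> x2) + u * w * Q"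
    unfolding split fz Lz by (simp add: algebra_simps)
  also have "0 \<le> \<dots>"
    using h uw psd[of "x1 - x2"] unfolding split Q_def by (simp add: inner_commute)
  finally show "u *\<^sub>R x1 + w *\<^sub>R x2 \<in> {x. 0 \<le> (c - L x - v) \<bullet> (x - y)}"
    unfolding z_def by simp
qed


lemma bounded_monotone_inequality_set:
  fixes L :: "'a::real_inner \<Rightarrow> 'a"
  assumes sym: "\<And>x y. L x \<bullet> y = x \<bullet> L y" and \<mu>: "0 < \<mu>"
    and coer: "\<And>x. \<mu> * (x \<bullet> x) \<le> x \<bullet> L x"
  shows "bounded {x. 0 \<le> (c - L x - v) \<bullet> (x - y)}"
proof -
  define a where "a = norm (c - v) + norm (L y)"
  define b where "b = norm (c - v) * norm y"
  have ab: "0 \<le> a" "0 \<le> b" unfolding a_def b_def by simp_all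
  have "norm x \<le> (a + b) / \<mu> + 1" if "0 \<le> (c - L x - v) \<bullet> (x - y)" for x
  proof -
    have "\<mu> * (norm x)\<^sup>2 \<le> x \<bullet> L x" using coer[of x] by (simp add: dot_square_norm)
    also have "\<dots> \<le> (c - v) \<bullet> (x - y) + x \<bullet> L y"
      using that sym[of x y] sym[of x x] by (simp add: inner_diff_left inner_diff_right algebra_simps)
    also have "\<dots> \<le> norm (c - v) * (norm x + norm y) + norm x * norm (L y)"
      using norm_cauchy_schwarz[of "c - v" "x - y"] norm_cauchy_schwarz[of x "L y"]
        norm_triangle_ineq4[of x y] mult_left_mono[OF norm_triangle_ineq4[of x y], of "norm (c - v)"]
      by simp
    also have "\<dots> = a * norm x + b" unfolding a_def b_def by (simp add: algebra_simps)
    finally have main: "\<mu> * (norm x)\<^sup>2 \<le> a * norm x + b" .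
    show ?thesis
    proof (cases "norm x \<le> 1")
      case True
      then show ?thesis using ab \<mu> by (simp add: add_increasing)
    next
      case False
      have "b \<le> b * norm x" using mult_left_mono[of 1 "norm x" b] False ab(2) by simp
      then have "\<mu> * norm x * norm x \<le> (a + b) * norm x"
        using main by (simp add: power2_eq_square algebra_simps)
      then have "\<mu> * norm x \<le> a + b" by (rule mult_right_le_imp_le) (use False in auto)
      then show ?thesis using \<mu> by (simp add: field_simps)
    qed
  qed
  then show ?thesis unfolding bounded_iff by blast
qed

lemma monotone_inequalities_finite_solvable:
  fixes L :: "'a::euclidean_space \<Rightarrow> 'a" and P :: "('a \<times> 'a) set"
  assumes lin: "linear L" and psd: "\<And>x. 0 \<le> x \<bullet> L x" and P: "finite P"
    and mono: "\<And>y v y' v'. (y, v) \<in> P \<Longrightarrow> (y', v') \<in> P \<Longrightarrow> 0 \<le> (y - y') \<bullet> (v - v')"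
  shows "\<exists>x. \<forall>(y, v)\<in>P. 0 \<le> (c - L x - v) \<bullet> (x - y)"
proof -
  define K where "K = (\<lambda>p. {x. 0 \<le> (c - L x - snd p) \<bullet> (x - fst p)})"
  have "continuous_on UNIV L" using lin by (simp add: linear_continuous_on linear_conv_bounded_linear)
  then have cont: "continuous_on UNIV (\<lambda>x. c - L x)" by (intro continuous_on_diff continuous_on_const)
  have small: "\<Inter>(K ` U) \<noteq> {}" if U: "U \<subseteq> P" "card U \<le> DIM('a) + 1" for U
  proof -
    have "\<exists>x. \<forall>(y, v)\<in>U. 0 \<le> (c - L x - v) \<bullet> (x - y)"
      by (rule Debrunner_Flor[OF cont finite_subset[OF U(1) P] U(2)]) (use mono U(1) in blast)
    then obtain x where "\<forall>(y, v)\<in>U. 0 \<le> (c - L x - v) \<bullet> (x - y)" by blast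
    then have "x \<in> \<Inter>(K ` U)" unfolding K_def by (fastforce simp: split_beta)
    then show ?thesis by blast
  qed
  have "\<Inter>(K ` P) \<noteq> {}"
  proof (cases "DIM('a) + 1 \<le> card (K ` P)")
    case True
    show ?thesis
    proof (rule Helly[OF True])
      show "\<forall>s\<in>K ` P. convex s"
        unfolding K_def using convex_monotone_inequality_set[OF lin psd] by blast
      fix t assume t: "t \<subseteq> K ` P" "card t = DIM('a) + 1"
      then obtain U where U: "U \<subseteq> P" "inj_on K U" "t = K ` U" unfolding subset_image_inj by blast
      then have "card U = DIM('a) + 1" using t(2) by (simp add: card_image)
      then show "\<Inter>t \<noteq> {}" using small[OF U(1)] U(3) by simp
    qed
  next
    case False
    from subset_image_inj[THEN iffD1, OF subset_refl[of "K ` P"]]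
    obtain U where U: "U \<subseteq> P" "inj_on K U" "K ` P = K ` U" by blast
    then have "card U \<le> DIM('a) + 1" using False card_image[OF U(2)] by simp
    then show ?thesis using small[OF U(1)] U(3) by simp
  qed
  then show ?thesis unfolding K_def by (auto simp: split_beta)
qed

theorem Minty:
  fixes T :: "'a::euclidean_space \<Rightarrow> 'a set" and L :: "'a \<Rightarrow> 'a"
  assumes mm: "maximal_monotone T" and lin: "linear L" and sym: "\<And>x y. L x \<bullet> y = x \<bullet> L y"
    and \<mu>: "0 < \<mu>" and coer: "\<And>x. \<mu> * (x \<bullet> x) \<le> x \<bullet> L x"
  shows "\<exists>x. c - L x \<in> T x"
proof -
  define G where "G = {(y, v). v \<in> T y}"
  define K where "K = (\<lambda>p. {x. 0 \<le> (c - L x - snd p) \<bullet> (x - fst p)})"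
  have psd: "0 \<le> x \<bullet> L x" for x using coer[of x] \<mu> by (meson inner_ge_zero mult_nonneg_nonneg order_trans less_imp_le)
  obtain p0 where p0: "p0 \<in> G" using maximal_monotone_graph_nonempty[OF mm] unfolding G_def by auto
  have "\<Inter>(K ` G) \<noteq> {}"
  proof (rule closed_fip_Heine_Borel)
    show "K p0 \<in> K ` G" using p0 by blast
    show "bounded (K p0)" unfolding K_def by (rule bounded_monotone_inequality_set[OF sym \<mu> coer])
    have "continuous_on UNIV L" using lin by (simp add: linear_continuous_on linear_conv_bounded_linear)
    then show "closed S" if "S \<in> K ` G" for S
      using that unfolding K_def
      by (auto intro!: closed_Collect_le continuous_on_inner continuous_on_diff continuous_on_const
          continuous_on_id)
    show "\<Inter>F \<noteq> {}" if F: "finite F" "F \<subseteq> K ` G" for F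
    proof -
      obtain U where U: "U \<subseteq> G" "finite U" "F = K ` U" using finite_subset_image[OF F] by blast
      have "0 \<le> (y - y') \<bullet> (v - v')" if "(y, v) \<in> U" "(y', v') \<in> U" for y v y' v'
        using U(1) that monotone_opD[OF maximal_monotone_monotone[OF mm]] unfolding G_def by blast
      then have "\<exists>x. \<forall>(y, v)\<in>U. 0 \<le> (c - L x - v) \<bullet> (x - y)"
        by (rule monotone_inequalities_finite_solvable[OF lin psd U(2)])
      then obtain x where "\<forall>(y, v)\<in>U. 0 \<le> (c - L x - v) \<bullet> (x - y)" by blast
      then have "x \<in> \<Inter>F" unfolding U(3) K_def by (auto simp: split_beta)
      then show ?thesis by blast
    qed
  qed
  then obtain x where x: "x \<in> \<Inter>(K ` G)" by blast
  have "c - L x \<in> T x"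
  proof (rule maximal_monotoneD[OF mm])
    fix y v assume "v \<in> T y"
    then have "x \<in> K (y, v)" using x unfolding G_def by blast
    then show "0 \<le> (x - y) \<bullet> (c - L x - v)" unfolding K_def by (simp add: inner_commute)
  qed
  then show ?thesis ..
qed

lemma resolvent_equation_unique:
  assumes mono: "monotone_op T" and M: "self_adjoint_pd M" and \<sigma>: "0 < \<sigma>"
    and w1: "v1 \<in> T w1" "M (z - w1) = \<sigma> *\<^sub>R v1" and w2: "v2 \<in> T w2" "M (z - w2) = \<sigma> *\<^sub>R v2"
  shows "w1 = w2"
proof -
  have "0 \<le> \<sigma> * ((w1 - w2) \<bullet> (v1 - v2))" using monotone_opD[OF mono w1(1) w2(1)] \<sigma> by simp
  also have "\<sigma> * ((w1 - w2) \<bullet> (v1 - v2)) = (w1 - w2) \<bullet> (M (z - w1) - M (z - w2))"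
    unfolding w1(2) w2(2) by (simp add: algebra_simps)
  also have "\<dots> = - ((w1 - w2) \<bullet> M (w1 - w2))"
    by (simp add: self_adjoint_pd_linear_simps[OF M] algebra_simps)
  finally have "(w1 - w2) \<bullet> M (w1 - w2) \<le> 0" by simp
  then show ?thesis using self_adjoint_pd_pos[OF M, of "w1 - w2"] by fastforce
qed

lemma resolvent_characterization:
  fixes T :: "'a::euclidean_space \<Rightarrow> 'a set"
  assumes mm: "maximal_monotone T" and M: "self_adjoint_pd M" and \<sigma>: "0 < \<sigma>"
  shows "\<exists>v\<in>T (resolvent T M \<sigma> z). M (z - resolvent T M \<sigma> z) = \<sigma> *\<^sub>R v"
proof -
  have step_iff: "z = w + \<sigma> *\<^sub>R inv M v \<longleftrightarrow> M (z - w) = \<sigma> *\<^sub>R v" for w v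
  proof -
    have "M (\<sigma> *\<^sub>R inv M v) = \<sigma> *\<^sub>R v"
      by (simp add: self_adjoint_pd_linear_simps[OF M] self_adjoint_pd_inv[OF M])
    then have "z - w = \<sigma> *\<^sub>R inv M v \<longleftrightarrow> M (z - w) = \<sigma> *\<^sub>R v"
      using inj_eq[OF self_adjoint_pd_inj[OF M]] by metis
    then show ?thesis by (auto simp: algebra_simps)
  qed
  have "\<exists>w. \<exists>v\<in>T w. M (z - w) = \<sigma> *\<^sub>R v"
  proof -
    define L where "L = (\<lambda>x. (1 / \<sigma>) *\<^sub>R M x)"
    have "linear L"
      unfolding L_def by (rule linearI) (simp_all add: self_adjoint_pd_linear_simps[OF M] algebra_simps)
    moreover have "L x \<bullet> y = x \<bullet> L y" for x y unfolding L_def by (simp add: self_adjoint_pd_sym[OF M])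
    moreover have "lambda_min M / \<sigma> * (x \<bullet> x) \<le> x \<bullet> L x" for x
      unfolding L_def using lambda_min_le_quadratic[OF M, of x] \<sigma> by (simp add: divide_right_mono)
    moreover have "0 < lambda_min M / \<sigma>" using lambda_min_pos[OF M] \<sigma> by simp
    ultimately obtain w where w: "(1 / \<sigma>) *\<^sub>R M z - L w \<in> T w" using Minty[OF mm] by metis
    moreover have "M (z - w) = \<sigma> *\<^sub>R ((1 / \<sigma>) *\<^sub>R M z - L w)"
      unfolding L_def using \<sigma> by (simp add: self_adjoint_pd_linear_simps[OF M] algebra_simps)
    ultimately show ?thesis by blast
  qed
  then have "\<exists>!w. \<exists>v\<in>T w. z = w + \<sigma> *\<^sub>R inv M v"
    unfolding step_iff using resolvent_equation_unique[OF maximal_monotone_monotone[OF mm] M \<sigma>] by blast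
  then have "\<exists>v\<in>T (resolvent T M \<sigma> z). z = resolvent T M \<sigma> z + \<sigma> *\<^sub>R inv M v"
    unfolding resolvent_def by (rule theI')
  then show ?thesis unfolding step_iff .
qed

section \<open>One step of the inexact relaxed proximal point method\<close>

lemma resolvent_firmly_nonexpansive:
  assumes mono: "monotone_op T" and M: "self_adjoint_pd M" and \<sigma>: "0 \<le> \<sigma>"
    and pv: "v \<in> T p" and Mzp: "M (z - p) = \<sigma> *\<^sub>R v" and w: "w \<in> zeros T"
  shows "(normM M (z - p))\<^sup>2 + (normM M (p - w))\<^sup>2 \<le> (normM M (z - w))\<^sup>2"
proof -
  have "0 \<le> (p - w) \<bullet> (v - 0)" using monotone_opD[OF mono pv] w unfolding zeros_def by blast
  moreover have "(z - p) \<bullet> M (p - w) = \<sigma> * ((p - w) \<bullet> v)"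
    using self_adjoint_pd_sym[OF M, of "z - p" "p - w"] Mzp by (simp add: inner_commute)
  ultimately have "0 \<le> (z - p) \<bullet> M (p - w)" using \<sigma> by simp
  moreover have "(normM M (z - w))\<^sup>2
      = (normM M (z - p))\<^sup>2 + 2 * ((z - p) \<bullet> M (p - w)) + (normM M (p - w))\<^sup>2"
    using normM_add_power2[OF M, of "z - p" "p - w"] by simp
  ultimately show ?thesis by linarith
qed

lemma resolvent_nonexpansive:
  assumes mono: "monotone_op T" and M: "self_adjoint_pd M" and \<sigma>: "0 \<le> \<sigma>"
    and pv: "v \<in> T p" and Mzp: "M (z - p) = \<sigma> *\<^sub>R v" and w: "w \<in> zeros T"
  shows "normM M (z - p) \<le> normM M (z - w)" and "normM M (p - w) \<le> normM M (z - w)"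
proof -
  have sq: "(normM M (z - p))\<^sup>2 \<le> (normM M (z - w))\<^sup>2" "(normM M (p - w))\<^sup>2 \<le> (normM M (z - w))\<^sup>2"
    using resolvent_firmly_nonexpansive[OF assms] zero_le_power2[of "normM M (z - p)"]
      zero_le_power2[of "normM M (p - w)"] by linarith+
  show "normM M (z - p) \<le> normM M (z - w)" by (rule power2_le_imp_le[OF sq(1) normM_nonneg[OF M]])
  show "normM M (p - w) \<le> normM M (z - w)" by (rule power2_le_imp_le[OF sq(2) normM_nonneg[OF M]])
qed

lemma relaxed_resolvent_Fejer:
  assumes mono: "monotone_op T" and M: "self_adjoint_pd M" and \<sigma>: "0 \<le> \<sigma>"
    and pv: "v \<in> T p" and Mzp: "M (z - p) = \<sigma> *\<^sub>R v" and w: "w \<in> zeros T"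
    and \<gamma>: "0 \<le> \<gamma>" "\<gamma> \<le> 2"
  shows "normM M (\<gamma> *\<^sub>R p + (1 - \<gamma>) *\<^sub>R z - w) \<le> normM M (z - w)"
proof (rule power2_le_imp_le)
  define A e B where "A = normM M (z - w)" and "e = normM M (z - p)" and "B = normM M (p - w)"
  have "\<gamma> *\<^sub>R p + (1 - \<gamma>) *\<^sub>R z - w = (1 - \<gamma>) *\<^sub>R (z - w) + \<gamma> *\<^sub>R (p - w)"
    by (simp add: algebra_simps)
  then have "(normM M (\<gamma> *\<^sub>R p + (1 - \<gamma>) *\<^sub>R z - w))\<^sup>2 = (1 - \<gamma>) * A\<^sup>2 + \<gamma> * B\<^sup>2 - \<gamma> * (1 - \<gamma>) * e\<^sup>2"
    using normM_convex_comb_power2[OF M, of \<gamma> "z - w" "p - w"] unfolding A_def B_def e_def by simp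
  also have "\<dots> \<le> A\<^sup>2"
  proof -
    have "\<gamma> * B\<^sup>2 \<le> \<gamma> * (A\<^sup>2 - e\<^sup>2)"
      using resolvent_firmly_nonexpansive[OF mono M \<sigma> pv Mzp w] \<gamma>
      unfolding A_def B_def e_def by (intro mult_left_mono) auto
    moreover have "0 \<le> \<gamma> * (2 - \<gamma>) * e\<^sup>2" using \<gamma> by simp
    ultimately show ?thesis by (simp add: algebra_simps power2_eq_square)
  qed
  finally show "(normM M (\<gamma> *\<^sub>R p + (1 - \<gamma>) *\<^sub>R z - w))\<^sup>2 \<le> (normM M (z - w))\<^sup>2"
    unfolding A_def .
qed (rule normM_nonneg[OF M])

text \<open>Trading the firm nonexpansiveness bound \<open>e\<^sup>2 + b\<^sup>2 \<le> A\<^sup>2\<close> against the subregularity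
  bound \<open>b \<sigma> \<le> \<kappa> e\<close>.\<close>
lemma subregular_tradeoff:
  fixes \<sigma> \<kappa> g b e A :: real
  assumes \<sigma>: "0 < \<sigma>" and g: "0 \<le> g" "g \<le> 1" and b: "0 \<le> b"
    and subreg: "b * \<sigma> \<le> \<kappa> * e" and firm: "e\<^sup>2 + b\<^sup>2 \<le> A\<^sup>2"
  shows "b\<^sup>2 + g * e\<^sup>2 \<le> A\<^sup>2 * (1 - (1 - g) * \<sigma>\<^sup>2 / (\<sigma>\<^sup>2 + \<kappa>\<^sup>2))"
proof -
  have R: "0 < \<sigma>\<^sup>2 + \<kappa>\<^sup>2" using \<sigma> by (simp add: add_pos_nonneg)
  have "(b * \<sigma>)\<^sup>2 \<le> (\<kappa> * e)\<^sup>2" using subreg b \<sigma> by (intro power_mono) auto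
  then have "(1 - g) * (b\<^sup>2 * \<sigma>\<^sup>2) \<le> (1 - g) * (\<kappa>\<^sup>2 * e\<^sup>2)"
    using g by (intro mult_left_mono) (auto simp: power_mult_distrib)
  moreover have "(\<kappa>\<^sup>2 + g * \<sigma>\<^sup>2) * (e\<^sup>2 + b\<^sup>2) \<le> (\<kappa>\<^sup>2 + g * \<sigma>\<^sup>2) * A\<^sup>2"
    using firm g by (intro mult_left_mono) auto
  ultimately have "(b\<^sup>2 + g * e\<^sup>2) * (\<sigma>\<^sup>2 + \<kappa>\<^sup>2) \<le> A\<^sup>2 * (\<kappa>\<^sup>2 + g * \<sigma>\<^sup>2)"
    by (simp add: algebra_simps)
  also have "\<kappa>\<^sup>2 + g * \<sigma>\<^sup>2 = (1 - (1 - g) * \<sigma>\<^sup>2 / (\<sigma>\<^sup>2 + \<kappa>\<^sup>2)) * (\<sigma>\<^sup>2 + \<kappa>\<^sup>2)"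
  proof -
    define q where "q = (1 - g) * \<sigma>\<^sup>2"
    have "(1 - q / (\<sigma>\<^sup>2 + \<kappa>\<^sup>2)) * (\<sigma>\<^sup>2 + \<kappa>\<^sup>2) = (\<sigma>\<^sup>2 + \<kappa>\<^sup>2) - q"
      using R by (auto simp: left_diff_distrib)
    then show ?thesis unfolding q_def by (simp add: algebra_simps)
  qed
  finally show ?thesis using R by (simp add: mult.assoc[symmetric] mult_le_cancel_right)
qed

lemma divide_sum_squares_complement:
  fixes \<sigma> \<kappa> :: real
  assumes "0 < \<sigma>\<^sup>2 + \<kappa>\<^sup>2"
  shows "\<sigma>\<^sup>2 / (\<sigma>\<^sup>2 + \<kappa>\<^sup>2) = 1 - \<kappa>\<^sup>2 / (\<sigma>\<^sup>2 + \<kappa>\<^sup>2)"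
proof -
  have "\<sigma>\<^sup>2 / (\<sigma>\<^sup>2 + \<kappa>\<^sup>2) + \<kappa>\<^sup>2 / (\<sigma>\<^sup>2 + \<kappa>\<^sup>2) = 1"
    using assms by (auto simp: add_divide_distrib[symmetric])
  then show ?thesis by linarith
qed

lemma subregular_distance_ratio:
  fixes \<sigma> \<kappa> b e A :: real
  assumes \<sigma>: "0 < \<sigma>" and \<kappa>: "0 \<le> \<kappa>" and b: "0 \<le> b" and A: "0 \<le> A"
    and subreg: "b * \<sigma> \<le> \<kappa> * e" and firm: "e\<^sup>2 + b\<^sup>2 \<le> A\<^sup>2"
  shows "b \<le> \<kappa> / sqrt (\<sigma>\<^sup>2 + \<kappa>\<^sup>2) * A"
proof (rule power2_le_imp_le)
  have R: "0 < \<sigma>\<^sup>2 + \<kappa>\<^sup>2" using \<sigma> by (simp add: add_pos_nonneg)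
  have "b\<^sup>2 \<le> A\<^sup>2 * (1 - \<sigma>\<^sup>2 / (\<sigma>\<^sup>2 + \<kappa>\<^sup>2))"
    using subregular_tradeoff[OF \<sigma> _ _ b subreg firm, of 0] by simp
  also have "\<dots> = (\<kappa> / sqrt (\<sigma>\<^sup>2 + \<kappa>\<^sup>2) * A)\<^sup>2"
    using R by (simp add: divide_sum_squares_complement power_mult_distrib power_divide)
  finally show "b\<^sup>2 \<le> (\<kappa> / sqrt (\<sigma>\<^sup>2 + \<kappa>\<^sup>2) * A)\<^sup>2" .
qed (use \<kappa> A in simp)

lemma relaxation_le_sqrt:
  fixes \<gamma> \<sigma> \<kappa> :: real
  assumes \<gamma>: "0 \<le> \<gamma>" "\<gamma> \<le> 1" and \<sigma>: "0 < \<sigma>"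
  shows "(1 - \<gamma>) + \<gamma> * (\<kappa> / sqrt (\<sigma>\<^sup>2 + \<kappa>\<^sup>2)) \<le> sqrt (1 - \<gamma> * \<sigma>\<^sup>2 / (\<sigma>\<^sup>2 + \<kappa>\<^sup>2))"
proof (rule real_le_rsqrt)
  define t where "t = \<kappa> / sqrt (\<sigma>\<^sup>2 + \<kappa>\<^sup>2)"
  have R: "0 < \<sigma>\<^sup>2 + \<kappa>\<^sup>2" using \<sigma> by (simp add: add_pos_nonneg)
  have "\<gamma> * \<sigma>\<^sup>2 / (\<sigma>\<^sup>2 + \<kappa>\<^sup>2) = \<gamma> * (1 - t\<^sup>2)"
    unfolding t_def using R by (simp add: divide_sum_squares_complement power_divide flip: times_divide_eq_right)
  moreover have "1 - \<gamma> * (1 - t\<^sup>2) - ((1 - \<gamma>) + \<gamma> * t)\<^sup>2 = \<gamma> * (1 - \<gamma>) * (1 - t)\<^sup>2"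
    by (simp add: power2_eq_square algebra_simps)
  moreover have "0 \<le> \<gamma> * (1 - \<gamma>) * (1 - t)\<^sup>2" using \<gamma> by simp
  ultimately show "((1 - \<gamma>) + \<gamma> * (\<kappa> / sqrt (\<sigma>\<^sup>2 + \<kappa>\<^sup>2)))\<^sup>2 \<le> 1 - \<gamma> * \<sigma>\<^sup>2 / (\<sigma>\<^sup>2 + \<kappa>\<^sup>2)"
    unfolding t_def by linarith
qed


lemma relaxation_le_contraction_sum:
  fixes \<gamma> \<sigma> \<kappa> :: real
  assumes \<gamma>: "0 < \<gamma>" "\<gamma> < 2" and \<sigma>: "0 < \<sigma>" and \<kappa>: "0 \<le> \<kappa>"
  shows "\<gamma> \<le> sqrt (1 - min \<gamma> (2 * \<gamma> - \<gamma>\<^sup>2) * \<sigma>\<^sup>2 / (\<sigma>\<^sup>2 + \<kappa>\<^sup>2))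
    + (min \<gamma> 1 * \<kappa> / sqrt (\<sigma>\<^sup>2 + \<kappa>\<^sup>2) + 1)"
proof (cases "\<gamma> \<le> 1")
  case True
  define t where "t = \<kappa> / sqrt (\<sigma>\<^sup>2 + \<kappa>\<^sup>2)"
  have "min \<gamma> (2 * \<gamma> - \<gamma>\<^sup>2) = \<gamma>" using True \<gamma> by (simp add: min_def power2_eq_square)
  then have "(1 - \<gamma>) + \<gamma> * t \<le> sqrt (1 - min \<gamma> (2 * \<gamma> - \<gamma>\<^sup>2) * \<sigma>\<^sup>2 / (\<sigma>\<^sup>2 + \<kappa>\<^sup>2))"
    unfolding t_def using relaxation_le_sqrt[of \<gamma> \<sigma> \<kappa>] True \<gamma> \<sigma> by simp
  moreover have "min \<gamma> 1 * \<kappa> / sqrt (\<sigma>\<^sup>2 + \<kappa>\<^sup>2) = \<gamma> * t" unfolding t_def using True by simp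
  moreover have "0 \<le> \<gamma> * t" unfolding t_def using \<gamma> \<kappa> by simp
  ultimately show ?thesis using True by linarith
next
  case False
  define R where "R = sqrt (\<sigma>\<^sup>2 + \<kappa>\<^sup>2)"
  have R: "0 < R" "R\<^sup>2 = \<sigma>\<^sup>2 + \<kappa>\<^sup>2" unfolding R_def using \<sigma> by (simp_all add: add_pos_nonneg)
  have min: "min \<gamma> (2 * \<gamma> - \<gamma>\<^sup>2) = 1 - (\<gamma> - 1)\<^sup>2" "min \<gamma> 1 = 1"
    using False by (simp_all add: min_def power2_eq_square algebra_simps)
  have "((\<gamma> - 1) * \<sigma> / R)\<^sup>2 \<le> 1 - (1 - (\<gamma> - 1)\<^sup>2) * \<sigma>\<^sup>2 / R\<^sup>2"
  proof -
    define q where "q = (1 - (\<gamma> - 1)\<^sup>2) * \<sigma>\<^sup>2"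
    have "1 - q / R\<^sup>2 = (R\<^sup>2 - q) / R\<^sup>2" using R(1) by (simp add: diff_divide_distrib)
    also have "R\<^sup>2 - q = (\<gamma> - 1)\<^sup>2 * \<sigma>\<^sup>2 + \<kappa>\<^sup>2" unfolding q_def R(2) by (simp add: algebra_simps)
    finally have "1 - (1 - (\<gamma> - 1)\<^sup>2) * \<sigma>\<^sup>2 / R\<^sup>2 = ((\<gamma> - 1)\<^sup>2 * \<sigma>\<^sup>2 + \<kappa>\<^sup>2) / R\<^sup>2"
      unfolding q_def .
    then show ?thesis using R by (simp add: power_divide power_mult_distrib divide_right_mono)
  qed
  then have "(\<gamma> - 1) * \<sigma> / R \<le> sqrt (1 - (1 - (\<gamma> - 1)\<^sup>2) * \<sigma>\<^sup>2 / R\<^sup>2)"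
    by (rule real_le_rsqrt)
  moreover have "(\<gamma> - 1) * R \<le> (\<gamma> - 1) * \<sigma> + \<kappa>"
  proof -
    have "R \<le> \<sigma> + \<kappa>"
      unfolding R_def using \<sigma> \<kappa> by (intro real_le_lsqrt) (simp_all add: power2_sum)
    then have "(\<gamma> - 1) * R \<le> (\<gamma> - 1) * (\<sigma> + \<kappa>)" using False by (intro mult_left_mono) auto
    moreover have "(\<gamma> - 1) * \<kappa> \<le> \<kappa>" using \<gamma> \<kappa> False by (intro mult_left_le_one_le) auto
    ultimately show ?thesis by (simp add: algebra_simps)
  qed
  then have "\<gamma> - 1 \<le> (\<gamma> - 1) * \<sigma> / R + \<kappa> / R"
    using R(1) by (simp add: field_simps)
  ultimately show ?thesis unfolding min R(2)[symmetric] R_def[symmetric] by (simp add: abs_of_pos[OF R(1)])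
qed

text \<open>Absorbing the inexactness \<open>(1 - \<delta>) x \<le> \<delta> e\<close> of the step into the contraction factor.\<close>
lemma inexact_contraction_bound:
  fixes S P A e \<gamma> \<delta> x :: real
  assumes \<delta>: "0 \<le> \<delta>" "\<delta> < 1" and A: "0 \<le> A" "e \<le> A" and \<gamma>: "0 < \<gamma>" "\<gamma> \<le> S + P"
    and x: "(1 - \<delta>) * x \<le> \<delta> * e"
  shows "S * A + \<gamma> * x \<le> (1 / (1 - \<delta>)) * (S + \<delta> * P) * A"
proof -
  have "(1 - \<delta>) * (\<gamma> * x) \<le> \<gamma> * (\<delta> * A)"
  proof -
    have "(1 - \<delta>) * (\<gamma> * x) \<le> \<gamma> * (\<delta> * e)" using x \<gamma> by (simp add: mult.left_commute)
    also have "\<dots> \<le> \<gamma> * (\<delta> * A)" using A \<delta> \<gamma> by (intro mult_left_mono) auto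
    finally show ?thesis .
  qed
  also have "\<dots> \<le> (S + P) * (\<delta> * A)" using \<gamma> \<delta> A by (intro mult_right_mono) auto
  finally have "(1 - \<delta>) * (S * A + \<gamma> * x) \<le> (S + \<delta> * P) * A" by (simp add: algebra_simps)
  then show ?thesis using \<delta> by (simp add: field_simps)
qed

context
  fixes T :: "'a::euclidean_space \<Rightarrow> 'a set" and M :: "'a \<Rightarrow> 'a" and \<sigma> \<kappa> :: real and z p v :: 'a
  assumes mm: "maximal_monotone T" and ne: "zeros T \<noteq> {}"
    and M: "self_adjoint_pd M" and M_max: "lambda_max M = 1"
    and \<sigma>: "0 < \<sigma>" and \<kappa>: "0 < \<kappa>" and pv: "v \<in> T p" and Mzp: "M (z - p) = \<sigma> *\<^sub>R v"
    and subreg: "infdist p (zeros T) \<le> \<kappa> * infdist 0 (T p)"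
begin

lemma zero_near_resolvent: "\<exists>w\<in>zeros T. normM M (p - w) * \<sigma> \<le> \<kappa> * normM M (z - p)"
proof -
  obtain w where w: "w \<in> zeros T" "infdist p (zeros T) = dist p w"
    using infdist_attains_inf[OF closed_zeros[OF mm] ne] by blast
  have "\<sigma> * norm v \<le> normM M (z - p)"
    using norm_M_le_normM[OF M, of "z - p"] Mzp \<sigma> M_max by simp
  have "normM M (p - w) \<le> norm (p - w)"
    using normM_le_sqrt_lambda_max_norm[OF M, of "p - w"] M_max by simp
  also have "\<dots> \<le> \<kappa> * infdist 0 (T p)" using w subreg by (simp add: dist_norm)
  also have "\<dots> \<le> \<kappa> * norm v" using infdist_le[OF pv, of 0] \<kappa> by simp
  finally have "normM M (p - w) * \<sigma> \<le> \<kappa> * (\<sigma> * norm v)"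
    using \<sigma> by (simp add: mult_right_mono mult.commute mult.left_commute)
  also have "\<dots> \<le> \<kappa> * normM M (z - p)" using \<open>\<sigma> * norm v \<le> _\<close> \<kappa> by simp
  finally show ?thesis using w(1) by blast
qed

lemma zero_near_resolvent_firm:
  assumes u: "u \<in> zeros T"
  obtains u' where "u' \<in> zeros T" "normM M (p - u') * \<sigma> \<le> \<kappa> * normM M (z - p)"
    "(normM M (z - p))\<^sup>2 + (normM M (p - u'))\<^sup>2 \<le> (normM M (z - u))\<^sup>2"
proof -
  obtain w where w: "w \<in> zeros T" "normM M (p - w) * \<sigma> \<le> \<kappa> * normM M (z - p)"
    using zero_near_resolvent by blast
  have firm: "(normM M (z - p))\<^sup>2 + (normM M (p - u))\<^sup>2 \<le> (normM M (z - u))\<^sup>2"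
    by (rule resolvent_firmly_nonexpansive[OF maximal_monotone_monotone[OF mm] M _ pv Mzp u]) (use \<sigma> in simp)
  show ?thesis
  proof (cases "normM M (p - w) \<le> normM M (p - u)")
    case True
    then have "(normM M (p - w))\<^sup>2 \<le> (normM M (p - u))\<^sup>2"
      by (intro power_mono normM_nonneg[OF M])
    then show ?thesis using that[OF w] firm by simp
  next
    case False
    then have "normM M (p - u) * \<sigma> \<le> \<kappa> * normM M (z - p)"
      using w(2) \<sigma> by (meson less_eq_real_def mult_le_cancel_right_pos not_le order_trans)
    then show ?thesis using that[OF u] firm by simp
  qed
qed

lemma underrelaxed_resolvent_contraction:
  assumes \<gamma>: "0 \<le> \<gamma>" "\<gamma> \<le> 1" and u: "u \<in> zeros T"
  shows "\<exists>u'\<in>zeros T. normM M (\<gamma> *\<^sub>R p + (1 - \<gamma>) *\<^sub>R z - u')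
    \<le> sqrt (1 - \<gamma> * \<sigma>\<^sup>2 / (\<sigma>\<^sup>2 + \<kappa>\<^sup>2)) * normM M (z - u)"
proof -
  obtain u2 where u2: "u2 \<in> zeros T" "normM M (p - u2) * \<sigma> \<le> \<kappa> * normM M (z - p)"
    "(normM M (z - p))\<^sup>2 + (normM M (p - u2))\<^sup>2 \<le> (normM M (z - u))\<^sup>2"
    using zero_near_resolvent_firm[OF u] by blast
  define A b where "A = normM M (z - u)" and "b = normM M (p - u2)"
  define u' where "u' = (1 - \<gamma>) *\<^sub>R u + \<gamma> *\<^sub>R u2"
  have u'_zero: "u' \<in> zeros T"
    unfolding u'_def using convexD[OF convex_zeros[OF mm] u u2(1), of "1 - \<gamma>" \<gamma>] \<gamma> by simp
  have "\<gamma> *\<^sub>R p + (1 - \<gamma>) *\<^sub>R z - u' = (1 - \<gamma>) *\<^sub>R (z - u) + \<gamma> *\<^sub>R (p - u2)"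
    unfolding u'_def by (simp add: algebra_simps)
  then have "normM M (\<gamma> *\<^sub>R p + (1 - \<gamma>) *\<^sub>R z - u') \<le> (1 - \<gamma>) * A + \<gamma> * b"
    using normM_triangle[OF M, of "(1 - \<gamma>) *\<^sub>R (z - u)" "\<gamma> *\<^sub>R (p - u2)"] \<gamma>
    unfolding A_def b_def by (simp add: normM_scaleR[OF M])
  also have "\<dots> \<le> (1 - \<gamma>) * A + \<gamma> * (\<kappa> / sqrt (\<sigma>\<^sup>2 + \<kappa>\<^sup>2) * A)"
  proof -
    have "b \<le> \<kappa> / sqrt (\<sigma>\<^sup>2 + \<kappa>\<^sup>2) * A"
      unfolding A_def b_def
      by (rule subregular_distance_ratio[OF \<sigma> _ _ _ u2(2) u2(3)]) (use \<kappa> M in \<open>simp_all add: normM_nonneg\<close>)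
    then show ?thesis using \<gamma> by (intro add_left_mono mult_left_mono) auto
  qed
  also have "\<dots> = ((1 - \<gamma>) + \<gamma> * (\<kappa> / sqrt (\<sigma>\<^sup>2 + \<kappa>\<^sup>2))) * A"
    by (simp add: algebra_simps)
  also have "\<dots> \<le> sqrt (1 - \<gamma> * \<sigma>\<^sup>2 / (\<sigma>\<^sup>2 + \<kappa>\<^sup>2)) * A"
    using relaxation_le_sqrt[OF \<gamma> \<sigma>] normM_nonneg[OF M] unfolding A_def by (rule mult_right_mono)
  finally show ?thesis unfolding A_def using u'_zero by blast
qed

lemma overrelaxed_resolvent_contraction:
  assumes \<gamma>: "1 \<le> \<gamma>" "\<gamma> \<le> 2" and u: "u \<in> zeros T"
  shows "\<exists>u'\<in>zeros T. normM M (\<gamma> *\<^sub>R p + (1 - \<gamma>) *\<^sub>R z - u')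
    \<le> sqrt (1 - (2 * \<gamma> - \<gamma>\<^sup>2) * \<sigma>\<^sup>2 / (\<sigma>\<^sup>2 + \<kappa>\<^sup>2)) * normM M (z - u)"
proof -
  obtain u2 where u2: "u2 \<in> zeros T" "normM M (p - u2) * \<sigma> \<le> \<kappa> * normM M (z - p)"
    "(normM M (z - p))\<^sup>2 + (normM M (p - u2))\<^sup>2 \<le> (normM M (z - u))\<^sup>2"
    using zero_near_resolvent_firm[OF u] by blast
  define A e b where "A = normM M (z - u)" and "e = normM M (z - p)" and "b = normM M (p - u2)"
  have "\<gamma> *\<^sub>R p + (1 - \<gamma>) *\<^sub>R z - u2 = (1 - \<gamma>) *\<^sub>R (z - u2) + \<gamma> *\<^sub>R (p - u2)"
    by (simp add: algebra_simps)
  then have "(normM M (\<gamma> *\<^sub>R p + (1 - \<gamma>) *\<^sub>R z - u2))\<^sup>2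
      = (1 - \<gamma>) * (normM M (z - u2))\<^sup>2 + \<gamma> * b\<^sup>2 - \<gamma> * (1 - \<gamma>) * e\<^sup>2"
    using normM_convex_comb_power2[OF M, of \<gamma> "z - u2" "p - u2"] unfolding b_def e_def by simp
  also have "\<dots> \<le> (1 - \<gamma>) * (e\<^sup>2 + b\<^sup>2) + \<gamma> * b\<^sup>2 - \<gamma> * (1 - \<gamma>) * e\<^sup>2"
    using resolvent_firmly_nonexpansive[OF maximal_monotone_monotone[OF mm] M _ pv Mzp u2(1)] \<sigma> \<gamma>
    unfolding b_def e_def by (simp add: mult_left_mono_neg)
  also have "\<dots> = b\<^sup>2 + (1 - \<gamma>)\<^sup>2 * e\<^sup>2" by (simp add: power2_eq_square algebra_simps)
  also have "\<dots> \<le> A\<^sup>2 * (1 - (1 - (1 - \<gamma>)\<^sup>2) * \<sigma>\<^sup>2 / (\<sigma>\<^sup>2 + \<kappa>\<^sup>2))"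
  proof (rule subregular_tradeoff[OF \<sigma>])
    have "(\<gamma> - 1) * (\<gamma> - 1) \<le> 1 * 1" using \<gamma> by (intro mult_mono) auto
    then show "(1 - \<gamma>)\<^sup>2 \<le> 1" by (simp add: power2_eq_square algebra_simps)
  qed (use u2 M in \<open>simp_all add: A_def b_def e_def normM_nonneg\<close>)
  also have "1 - (1 - \<gamma>)\<^sup>2 = 2 * \<gamma> - \<gamma>\<^sup>2" by (simp add: power2_eq_square algebra_simps)
  finally have "normM M (\<gamma> *\<^sub>R p + (1 - \<gamma>) *\<^sub>R z - u2)
      \<le> sqrt (A\<^sup>2 * (1 - (2 * \<gamma> - \<gamma>\<^sup>2) * \<sigma>\<^sup>2 / (\<sigma>\<^sup>2 + \<kappa>\<^sup>2)))"
    by (rule real_le_rsqrt)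
  then show ?thesis
    using u2(1) normM_nonneg[OF M, of "z - u"] unfolding A_def by (auto simp: real_sqrt_mult mult.commute)
qed

lemma relaxed_resolvent_contraction:
  assumes \<gamma>: "0 < \<gamma>" "\<gamma> < 2" and u: "u \<in> zeros T"
  shows "\<exists>u'\<in>zeros T. normM M (\<gamma> *\<^sub>R p + (1 - \<gamma>) *\<^sub>R z - u')
    \<le> sqrt (1 - min \<gamma> (2 * \<gamma> - \<gamma>\<^sup>2) * \<sigma>\<^sup>2 / (\<sigma>\<^sup>2 + \<kappa>\<^sup>2)) * normM M (z - u)"
proof (cases "\<gamma> \<le> 1")
  case True
  then have "min \<gamma> (2 * \<gamma> - \<gamma>\<^sup>2) = \<gamma>" using \<gamma> by (simp add: min_def power2_eq_square)
  then show ?thesis using underrelaxed_resolvent_contraction[OF _ True u] \<gamma> by simp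
next
  case False
  then have "min \<gamma> (2 * \<gamma> - \<gamma>\<^sup>2) = 2 * \<gamma> - \<gamma>\<^sup>2" by (simp add: min_def power2_eq_square)
  then show ?thesis using overrelaxed_resolvent_contraction[OF _ _ u] False \<gamma> by simp
qed

end

lemma IGPPAstep_Fejer:
  fixes T :: "'a::euclidean_space \<Rightarrow> 'a set"
  assumes mm: "maximal_monotone T" and M: "self_adjoint_pd M" and \<sigma>: "0 < \<sigma>"
    and \<gamma>: "0 \<le> \<gamma>" "\<gamma> \<le> 2" and step: "IGPPAstep T z \<sigma> \<eta> \<delta> \<gamma> M z'" and w: "w \<in> zeros T"
  shows "normM M (z' - w) \<le> normM M (z - w) + \<gamma> * \<eta>"
proof -
  define p where "p = resolvent T M \<sigma> z"
  obtain v where pv: "v \<in> T p" "M (z - p) = \<sigma> *\<^sub>R v"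
    using resolvent_characterization[OF mm M \<sigma>] unfolding p_def by blast
  obtain y where z': "z' = \<gamma> *\<^sub>R y + (1 - \<gamma>) *\<^sub>R z" and y: "normM M (y - p) \<le> \<eta>"
    using step unfolding IGPPAstep_def p_def by auto
  have "z' - w = (\<gamma> *\<^sub>R p + (1 - \<gamma>) *\<^sub>R z - w) + \<gamma> *\<^sub>R (y - p)"
    unfolding z' by (simp add: algebra_simps)
  then have "normM M (z' - w) \<le> normM M (\<gamma> *\<^sub>R p + (1 - \<gamma>) *\<^sub>R z - w) + normM M (\<gamma> *\<^sub>R (y - p))"
    using normM_triangle[OF M] by metis
  also have "\<dots> = normM M (\<gamma> *\<^sub>R p + (1 - \<gamma>) *\<^sub>R z - w) + \<gamma> * normM M (y - p)"
    using \<gamma> by (simp add: normM_scaleR[OF M])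
  also have "\<dots> \<le> normM M (z - w) + \<gamma> * \<eta>"
    using relaxed_resolvent_Fejer[OF maximal_monotone_monotone[OF mm] M less_imp_le[OF \<sigma>] pv w \<gamma>] y \<gamma>
    by (intro add_mono mult_left_mono) auto
  finally show ?thesis .
qed

lemma IGPPA_resolvent_norm_bound:
  fixes T :: "'a::euclidean_space \<Rightarrow> 'a set" and z :: "nat \<Rightarrow> 'a"
  assumes mm: "maximal_monotone T" and M: "self_adjoint_pd M" and M_max: "lambda_max M = 1"
    and \<sigma>: "\<And>k. 0 < \<sigma> k" and \<eta>: "\<And>k. 0 \<le> \<eta> k" "summable \<eta>" and \<gamma>: "0 \<le> \<gamma>" "\<gamma> \<le> 2"
    and iter: "\<And>k. IGPPAstep T (z k) (\<sigma> k) (\<eta> k) (\<delta> k) \<gamma> M (z (Suc k))"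
    and zbar: "zbar \<in> zeros T"
  shows "norm (resolvent T M (\<sigma> k) (z k))
    \<le> norm zbar + (1 / lambda_min M) * (normM M (zbar - z 0) + \<gamma> * (\<Sum>k. \<eta> k))"
proof -
  define p where "p = resolvent T M (\<sigma> k) (z k)"
  define R where "R = normM M (zbar - z 0) + \<gamma> * (\<Sum>k. \<eta> k)"
  have iterates: "normM M (z j - zbar) \<le> normM M (zbar - z 0) + \<gamma> * (\<Sum>i<j. \<eta> i)" for j
  proof (induction j)
    case 0
    then show ?case using normM_minus_commute[OF M] by simp
  next
    case (Suc j)
    then show ?case using IGPPAstep_Fejer[OF mm M \<sigma> \<gamma> iter zbar, of j] by (simp add: algebra_simps)
  qed
  obtain v where pv: "v \<in> T p" "M (z k - p) = \<sigma> k *\<^sub>R v"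
    using resolvent_characterization[OF mm M \<sigma>] unfolding p_def by blast
  have "normM M (p - zbar) \<le> normM M (z k - zbar)"
    using resolvent_nonexpansive(2)[OF maximal_monotone_monotone[OF mm] M _ pv zbar] \<sigma>[of k] by simp
  also have "\<dots> \<le> R"
  proof -
    have "(\<Sum>i<k. \<eta> i) \<le> (\<Sum>i. \<eta> i)" by (rule sum_le_suminf[OF \<eta>(2)]) (auto simp: \<eta>(1))
    then have "\<gamma> * (\<Sum>i<k. \<eta> i) \<le> \<gamma> * (\<Sum>i. \<eta> i)" using \<gamma> by (intro mult_left_mono) auto
    then show ?thesis using iterates[of k] unfolding R_def by linarith
  qed
  finally have "lambda_min M * norm (p - zbar) \<le> R"
    using lambda_min_norm_le_normM[OF M M_max, of "p - zbar"] by linarith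
  then have "norm (p - zbar) \<le> (1 / lambda_min M) * R"
    using lambda_min_pos[OF M] by (simp add: field_simps)
  then show ?thesis using norm_triangle_sub[of p zbar] unfolding p_def R_def by linarith
qed

lemma IGPPAstep_relative_error:
  assumes M: "self_adjoint_pd M" and \<delta>: "0 \<le> \<delta>" and step: "IGPPAstep T z \<sigma> \<eta> \<delta> \<gamma> M z'"
  obtains w where "z' = \<gamma> *\<^sub>R w + (1 - \<gamma>) *\<^sub>R z"
    "(1 - \<delta>) * normM M (w - resolvent T M \<sigma> z) \<le> \<delta> * normM M (z - resolvent T M \<sigma> z)"
proof -
  define p where "p = resolvent T M \<sigma> z"
  obtain w where z': "z' = \<gamma> *\<^sub>R w + (1 - \<gamma>) *\<^sub>R z" and w: "normM M (w - p) \<le> \<delta> * normM M (w - z)"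
    using step unfolding IGPPAstep_def p_def by auto
  have "normM M (w - z) \<le> normM M (w - p) + normM M (z - p)"
    using normM_triangle[OF M, of "w - p" "p - z"] normM_minus_commute[OF M, of p z] by simp
  then have "\<delta> * normM M (w - z) \<le> \<delta> * (normM M (w - p) + normM M (z - p))"
    using \<delta> by (intro mult_left_mono) auto
  then have "(1 - \<delta>) * normM M (w - p) \<le> \<delta> * normM M (z - p)" using w by (simp add: algebra_simps)
  with z' show ?thesis using that unfolding p_def by blast
qed

lemma IGPPAstep_contraction:
  fixes T :: "'a::euclidean_space \<Rightarrow> 'a set"
  assumes mm: "maximal_monotone T" and ne: "zeros T \<noteq> {}"
    and M: "self_adjoint_pd M" and M_max: "lambda_max M = 1"
    and \<sigma>: "0 < \<sigma>" and \<kappa>: "0 < \<kappa>" and \<gamma>: "0 < \<gamma>" "\<gamma> < 2" and \<delta>: "0 \<le> \<delta>" "\<delta> < 1"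
    and step: "IGPPAstep T z \<sigma> \<eta> \<delta> \<gamma> M z'"
    and subreg: "infdist (resolvent T M \<sigma> z) (zeros T) \<le> \<kappa> * infdist 0 (T (resolvent T M \<sigma> z))"
  shows "distM M z' (zeros T) \<le>
     (1 / (1 - \<delta>)) *
       (sqrt (1 - min \<gamma> (2 * \<gamma> - \<gamma>\<^sup>2) * \<sigma>\<^sup>2 / (\<sigma>\<^sup>2 + \<kappa>\<^sup>2))
        + \<delta> * (min \<gamma> 1 * \<kappa> / sqrt (\<sigma>\<^sup>2 + \<kappa>\<^sup>2) + 1))
     * distM M z (zeros T)"
proof (rule le_mult_distM[OF M ne])
  define p where "p = resolvent T M \<sigma> z"
  define S where "S = sqrt (1 - min \<gamma> (2 * \<gamma> - \<gamma>\<^sup>2) * \<sigma>\<^sup>2 / (\<sigma>\<^sup>2 + \<kappa>\<^sup>2))"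
  define P where "P = min \<gamma> 1 * \<kappa> / sqrt (\<sigma>\<^sup>2 + \<kappa>\<^sup>2) + 1"
  obtain v where pv: "v \<in> T p" "M (z - p) = \<sigma> *\<^sub>R v"
    using resolvent_characterization[OF mm M \<sigma>] unfolding p_def by blast
  obtain w where z': "z' = \<gamma> *\<^sub>R w + (1 - \<gamma>) *\<^sub>R z"
    and inexact: "(1 - \<delta>) * normM M (w - p) \<le> \<delta> * normM M (z - p)"
    using IGPPAstep_relative_error[OF M \<delta>(1) step] unfolding p_def by blast
  fix u assume u: "u \<in> zeros T"
  obtain u' where u': "u' \<in> zeros T" "normM M (\<gamma> *\<^sub>R p + (1 - \<gamma>) *\<^sub>R z - u') \<le> S * normM M (z - u)"
    using relaxed_resolvent_contraction[OF mm ne M M_max \<sigma> \<kappa> pv subreg[folded p_def] \<gamma> u]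
    unfolding S_def by blast
  have "normM M (z - p) \<le> normM M (z - u)"
    using resolvent_nonexpansive(1)[OF maximal_monotone_monotone[OF mm] M _ pv u] \<sigma> by simp
  have "distM M z' (zeros T) \<le> normM M (z' - u')"
    using distM_le[OF M u'(1), of z'] normM_minus_commute[OF M, of u' z'] by linarith
  also have "z' - u' = (\<gamma> *\<^sub>R p + (1 - \<gamma>) *\<^sub>R z - u') + \<gamma> *\<^sub>R (w - p)"
    unfolding z' by (simp add: algebra_simps)
  also have "normM M \<dots> \<le> normM M (\<gamma> *\<^sub>R p + (1 - \<gamma>) *\<^sub>R z - u') + normM M (\<gamma> *\<^sub>R (w - p))"
    by (rule normM_triangle[OF M])
  also have "\<dots> \<le> S * normM M (z - u) + \<gamma> * normM M (w - p)"
    using u'(2) \<gamma> by (simp add: normM_scaleR[OF M])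
  also have "\<dots> \<le> (1 / (1 - \<delta>)) * (S + \<delta> * P) * normM M (z - u)"
    using inexact_contraction_bound[OF \<delta> normM_nonneg[OF M] \<open>normM M (z - p) \<le> _\<close> \<gamma>(1) _ inexact]
      relaxation_le_contraction_sum[OF \<gamma> \<sigma> less_imp_le[OF \<kappa>]]
    unfolding S_def P_def by blast
  finally show "distM M z' (zeros T) \<le> (1 / (1 - \<delta>)) *
       (sqrt (1 - min \<gamma> (2 * \<gamma> - \<gamma>\<^sup>2) * \<sigma>\<^sup>2 / (\<sigma>\<^sup>2 + \<kappa>\<^sup>2))
        + \<delta> * (min \<gamma> 1 * \<kappa> / sqrt (\<sigma>\<^sup>2 + \<kappa>\<^sup>2) + 1)) * normM M (u - z)"
    unfolding S_def P_def using normM_minus_commute[OF M, of z u] by simp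
qed

theorem theorem2:
  fixes T :: "'a::euclidean_space \<Rightarrow> 'a set"
    and M :: "'a \<Rightarrow> 'a"
    and z :: "nat \<Rightarrow> 'a"
    and \<sigma> \<eta> \<delta> :: "nat \<Rightarrow> real"
    and \<gamma> r \<kappa> :: real
    and zbar0 :: 'a
  assumes T_mm: "maximal_monotone T"
    and Omega_ne: "zeros T \<noteq> {}"
    and M_sapd: "self_adjoint_pd M"
    and M_max: "lambda_max M = 1"
    and nonneg: "\<And>k. 0 \<le> \<sigma> k" "\<And>k. 0 \<le> \<eta> k" "\<And>k. 0 \<le> \<delta> k"
    and eta_sum: "summable \<eta>"
    and sigma_inf: "\<exists>c>0. \<forall>k. c \<le> \<sigma> k"
    and delta_sup: "\<exists>c<1. \<forall>k. \<delta> k \<le> c"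
    and gamma: "0 < \<gamma>" "\<gamma> < 2"
    and iter: "\<And>k. IGPPAstep T (z k) (\<sigma> k) (\<eta> k) (\<delta> k) \<gamma> M (z (Suc k))"
    and bms: "bounded_metric_subregular T"
    and zbar0: "zbar0 \<in> zeros T" "normM M (zbar0 - z 0) = distM M (z 0) (zeros T)"
    and r: "0 < r"
      "norm zbar0 + (1 / lambda_min M) * (distM M (z 0) (zeros T) + \<gamma> * (\<Sum>k. \<eta> k)) \<le> r"
    and kappa: "0 < \<kappa>"
      "\<And>x. norm x \<le> r \<Longrightarrow> T x \<noteq> {} \<Longrightarrow> infdist x (zeros T) \<le> \<kappa> * infdist 0 (T x)"
  shows "\<forall>k. distM M (z (Suc k)) (zeros T) \<le>
     (1 / (1 - \<delta> k)) *
       (sqrt (1 - min \<gamma> (2 * \<gamma> - \<gamma>\<^sup>2) * (\<sigma> k)\<^sup>2 / ((\<sigma> k)\<^sup>2 + \<kappa>\<^sup>2))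
        + \<delta> k * (min \<gamma> 1 * \<kappa> / sqrt ((\<sigma> k)\<^sup>2 + \<kappa>\<^sup>2) + 1))
     * distM M (z k) (zeros T)"
proof
  fix k
  have \<sigma>: "0 < \<sigma> j" for j using sigma_inf by (meson less_le_trans)
  have \<delta>: "\<delta> k < 1" using delta_sup by (meson le_less_trans)
  define p where "p = resolvent T M (\<sigma> k) (z k)"
  have "norm p \<le> r"
    using IGPPA_resolvent_norm_bound[OF T_mm M_sapd M_max \<sigma> nonneg(2) eta_sum _ _ iter zbar0(1), of k]
      gamma r(2) zbar0(2) unfolding p_def by simp
  moreover have "T p \<noteq> {}" using resolvent_characterization[OF T_mm M_sapd \<sigma>] unfolding p_def by blast
  ultimately have "infdist p (zeros T) \<le> \<kappa> * infdist 0 (T p)" by (rule kappa(2))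
  then show "distM M (z (Suc k)) (zeros T) \<le>
     (1 / (1 - \<delta> k)) *
       (sqrt (1 - min \<gamma> (2 * \<gamma> - \<gamma>\<^sup>2) * (\<sigma> k)\<^sup>2 / ((\<sigma> k)\<^sup>2 + \<kappa>\<^sup>2))
        + \<delta> k * (min \<gamma> 1 * \<kappa> / sqrt ((\<sigma> k)\<^sup>2 + \<kappa>\<^sup>2) + 1))
     * distM M (z k) (zeros T)"
    unfolding p_def
    by (rule IGPPAstep_contraction[OF T_mm Omega_ne M_sapd M_max \<sigma> kappa(1) gamma nonneg(3) \<delta> iter])
qed

end
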